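(* Consider the problem $\min_{x\in\mathbb R^n} f(x)$ subject to $Ax=b$, where $f:\mathbb R^n\to\mathbb R$ is convex with $L$-Lipschitz continuous gradient, $A\in\mathbb R^{m\times n}$, $b\in\mathbb R^m$, and assume the KKT set $\Omega$ is nonempty. Let $\{(x_k,\lambda_k)\}_{k\ge0}$ be generated by the accelerated augmented Lagrangian method in Case II described in the context, with $\gamma\le1/L$, $\rho\in(0,1)$ and $\eta\in(\rho,1)$, and let $(x^*,\lambda^* )\in\Omega$ be the limit of $\{(x_k,\lambda_k)\}_{k\ge0}$. Then $\|\nabla f(x_k)+A^\top\lambda_k\|=o(1/t_k)$ as $k\to+\infty$, and $\sum_{k=1}^{+\infty} t_{k+1}\|\nabla f(x_k)+A^\top\lambda_k\|^2<+\infty$.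
   Context: The KKT set is $\Omega=\{(x^*,\lambda^* )\in\mathbb R^n\times\mathbb R^m: Ax^*=b,\ \nabla f(x^* )+A^\top\lambda^*=0\}$. Parameter sequence: $\{t_k\}_{k\ge1}$ is nondecreasing, $t_1=1$, $t_k>1$ for all $k>2$, $t_k\to+\infty$, and $t_{k+1}^2-t_k^2\le\rho t_{k+1}$ for all $k\ge 1$. Fix $\eta$, $\gamma>0$, $\delta>0$, $\beta\ge0$. Algorithm (Case II): initial points $x_0=x_1\in\mathbb R^n$, $\lambda_0=\lambda_1\in\mathbb R^m$. For $k=1,2,\dots$: set $\alpha_k=(t_{k+1}-\eta)/\eta$, $c_k=t_{k+1}/\eta$, $\bar x_k=x_k+\frac{t_k-1}{t_{k+1}}(x_k-x_{k-1})$, $\bar\lambda_k=\lambda_k+\frac{t_k-1}{t_{k+1}}(\lambda_k-\lambda_{k-1})$, $p_k=c_k\bar\lambda_k-\alpha_k\lambda_k$, $r_k=\alpha_kAx_k+b$; $x_{k+1}=\arg\min_{x}\{\langle\nabla f(\bar x_k),x\rangle+\frac\beta2\|Ax-b\|^2+\frac1{2\gamma}\|x-\bar x_k\|^2+\langle p_k,Ax-b\rangle+\frac\delta2\|c_kAx-r_k\|^2\}$; $\lambda_{k+1}=\bar\lambda_k+\delta(c_kAx_{k+1}-r_k)$. *)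

theory Defs
  imports "HOL-Analysis.Analysis" "HOL-Library.Landau_Symbols"
begin

definition KKT_set ::
  "(real^'n \<Rightarrow> real^'n) \<Rightarrow> real^'n^'m \<Rightarrow> real^'m \<Rightarrow> ((real^'n) \<times> (real^'m)) set" where
  "KKT_set gf A b = {(xs, ls). A *v xs = b \<and> gf xs + transpose A *v ls = 0}"

definition alpha_k :: "(nat \<Rightarrow> real) \<Rightarrow> real \<Rightarrow> nat \<Rightarrow> real" where
  "alpha_k t \<eta> k = (t (Suc k) - \<eta>) / \<eta>"

definition c_k :: "(nat \<Rightarrow> real) \<Rightarrow> real \<Rightarrow> nat \<Rightarrow> real" where
  "c_k t \<eta> k = t (Suc k) / \<eta>"

definition extrap :: "(nat \<Rightarrow> real) \<Rightarrow> (nat \<Rightarrow> 'a::real_vector) \<Rightarrow> nat \<Rightarrow> 'a" where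
  "extrap t z k = z k + ((t k - 1) / t (Suc k)) *\<^sub>R (z k - z (k - 1))"

definition subproblem_obj ::
  "(real^'n \<Rightarrow> real^'n) \<Rightarrow> real^'n^'m \<Rightarrow> real^'m \<Rightarrow> (nat \<Rightarrow> real) \<Rightarrow> real \<Rightarrow> real \<Rightarrow> real \<Rightarrow> real
    \<Rightarrow> (nat \<Rightarrow> real^'n) \<Rightarrow> (nat \<Rightarrow> real^'m) \<Rightarrow> nat \<Rightarrow> real^'n \<Rightarrow> real" where
  "subproblem_obj gf A b t \<eta> \<gamma> \<delta> \<beta> x l k y =
     (let xb = extrap t x k; lb = extrap t l k;
          p = c_k t \<eta> k *\<^sub>R lb - alpha_k t \<eta> k *\<^sub>R l k;
          r = alpha_k t \<eta> k *\<^sub>R (A *v x k) + b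
      in gf xb \<bullet> y + \<beta> / 2 * (norm (A *v y - b))\<^sup>2 + 1 / (2 * \<gamma>) * (norm (y - xb))\<^sup>2
         + p \<bullet> (A *v y - b) + \<delta> / 2 * (norm (c_k t \<eta> k *\<^sub>R (A *v y) - r))\<^sup>2)"

end

theory Submission
  imports Defs
begin

(* Let (xs, ls) be the limit of the iterates, sigma = 1/eta and
   gap x = f x - f xs + <ls, A x - b>, a nonnegative convex function with gradient
   gf x + A^T ls.  With w_k = x_k + sigma t_{k+1} (x_{k+1} - x_k) and
   mu_k = l_k + sigma t_{k+1} (l_{k+1} - l_k), the Lyapunov function
     E_k = (sigma t_k)^2 gap(x_k) + beta sigma t_k (sigma t_k + 1)/2 |A x_k - b|^2
           + (|w_{k-1} - xs|^2 + (sigma - 1) |x_{k-1} - xs|^2) / (2 gamma)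
           + (|mu_{k-1} - ls|^2 + (sigma - 1) |l_{k-1} - ls|^2) / (2 delta)
   decreases by at least a positive combination of t_{k+1} gap(x_k), t_k beta |A x_k - b|^2,
   t_k |x_k - x_{k-1}|^2 and t_k |l_k - l_{k-1}|^2, so these four series converge.
   Since the iterates converge, E_k differs by o(1) from the same quantities weighted by t_k^2;
   that weighted sum therefore converges, and as its quotient by t_k is summable while
   sum 1/t_k diverges (t_k <= k), its limit is 0.  So every such quantity u satisfies
   t_k^2 u_k -> 0 and sum t_k u_k < oo, a property stable under sums, multiples, domination and
   index shifts.  The residual splits into gf x_k - gf xs, controlled by gap through
   L-smoothness, and N_k = A^T (l_k - ls).  The optimality condition of the x-subproblem
   expresses A^T (mu_k - ls) through controlled quantities, and N_{k+1} is a convex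
   combination of N_k and that vector with weight eta / t_{k+1}; a discrete Gronwall argument
   for t_k |N_k| gives the same rates. *)

lemma convex_on_gradient_ineq:
  fixes f :: "'a::real_inner \<Rightarrow> real"
  assumes cvx: "convex_on UNIV f" and der: "\<And>z. (f has_derivative (\<lambda>h. gf z \<bullet> h)) (at z)"
  shows "f x + gf x \<bullet> (y - x) \<le> f y"
proof -
  define g where "g s = f (x + s *\<^sub>R (y - x))" for s :: real
  have "convex_on UNIV g"
  proof (rule convex_onI)
    fix u a b :: real assume u: "u > 0" "u < 1"
    have "x + ((1 - u) * a + u * b) *\<^sub>R (y - x)
        = (1 - u) *\<^sub>R (x + a *\<^sub>R (y - x)) + u *\<^sub>R (x + b *\<^sub>R (y - x))"
      by (simp add: algebra_simps)
    then show "g ((1 - u) *\<^sub>R a + u *\<^sub>R b) \<le> (1 - u) * g a + u * g b"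
      unfolding g_def using convex_onD[OF cvx, of u] u by simp
  qed simp
  moreover have "(g has_field_derivative (gf x \<bullet> (y - x))) (at 0)"
  proof -
    have "((\<lambda>s. x + s *\<^sub>R (y - x)) has_derivative (\<lambda>s. s *\<^sub>R (y - x))) (at 0)"
      by (auto intro!: derivative_eq_intros)
    from has_derivative_compose[OF this der[of "x + 0 *\<^sub>R (y - x)"]]
    show ?thesis
      unfolding has_field_derivative_def g_def o_def
      by (rule has_derivative_eq_rhs) (auto simp: fun_eq_iff)
  qed
  ultimately have "g 1 - g 0 \<ge> (gf x \<bullet> (y - x)) * (1 - 0)"
    by (intro convex_on_imp_above_tangent) auto
  then show ?thesis unfolding g_def by simp
qed

lemma lipschitz_gradient_upper_bound:
  fixes f :: "'a::real_inner \<Rightarrow> real"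
  assumes der: "\<And>z. (f has_derivative (\<lambda>h. gf z \<bullet> h)) (at z)"
    and lip: "\<And>y z. norm (gf y - gf z) \<le> L * norm (y - z)"
  shows "f (x + h) \<le> f x + gf x \<bullet> h + L / 2 * (norm h)\<^sup>2"
proof -
  define g where "g s = f (x + s *\<^sub>R h) - s * (gf x \<bullet> h) - L / 2 * s\<^sup>2 * (norm h)\<^sup>2" for s :: real
  have g_deriv: "(g has_real_derivative ((gf (x + s *\<^sub>R h) - gf x) \<bullet> h - L * s * (norm h)\<^sup>2)) (at s)"
    for s
  proof -
    have "((\<lambda>s. x + s *\<^sub>R h) has_derivative (\<lambda>u. u *\<^sub>R h)) (at s)"
      by (auto intro!: derivative_eq_intros)
    from has_derivative_compose[OF this der[of "x + s *\<^sub>R h"]]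
    have "((\<lambda>s. f (x + s *\<^sub>R h)) has_derivative (\<lambda>u. gf (x + s *\<^sub>R h) \<bullet> (u *\<^sub>R h))) (at s)"
      by (simp add: o_def)
    then have f_deriv: "((\<lambda>s. f (x + s *\<^sub>R h)) has_real_derivative (gf (x + s *\<^sub>R h) \<bullet> h)) (at s)"
      unfolding has_field_derivative_def
      by (rule has_derivative_eq_rhs) (auto simp: fun_eq_iff)
    show ?thesis unfolding g_def
      by (rule derivative_eq_intros f_deriv refl | simp add: inner_diff_left algebra_simps)+
  qed
  have "g 1 \<le> g 0"
  proof (rule DERIV_nonpos_imp_nonincreasing[of 0 1 g])
    fix s :: real assume s: "0 \<le> s" "s \<le> 1"
    have "(gf (x + s *\<^sub>R h) - gf x) \<bullet> h \<le> norm (gf (x + s *\<^sub>R h) - gf x) * norm h"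
      by (rule norm_cauchy_schwarz)
    also have "\<dots> \<le> L * norm (s *\<^sub>R h) * norm h"
      using lip[of "x + s *\<^sub>R h" x] by (simp add: mult_right_mono)
    also have "\<dots> = L * s * (norm h)\<^sup>2" using s by (simp add: power2_eq_square)
    finally show "\<exists>y. DERIV g s :> y \<and> y \<le> 0" using g_deriv[of s] by auto
  qed simp
  then show ?thesis unfolding g_def by simp
qed

text \<open>The one-step estimate of accelerated gradient methods: \<open>z\<close> is reached from the
  extrapolated point \<open>y\<close>, and is compared with the previous iterate \<open>v\<close> and a reference
  point \<open>p\<close> with weights \<open>a\<^sup>2 - a\<close> and \<open>a\<close>.\<close>
lemma convex_smooth_three_point:
  fixes \<phi> :: "'a::real_inner \<Rightarrow> real"
  assumes tangent: "\<And>u v. \<phi> u + G u \<bullet> (v - u) \<le> \<phi> v"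
    and descent: "\<And>u h. \<phi> (u + h) \<le> \<phi> u + G u \<bullet> h + L / 2 * (norm h)\<^sup>2"
    and a: "a \<ge> 1"
  shows "a\<^sup>2 * \<phi> z \<le> (a\<^sup>2 - a) * \<phi> v + a * \<phi> p
           + a * (G y \<bullet> (v + a *\<^sub>R (z - v) - p)) + a\<^sup>2 * (L / 2 * (norm (z - y))\<^sup>2)"
proof -
  define Q where "Q = L / 2 * (norm (z - y))\<^sup>2"
  have up: "\<phi> z \<le> \<phi> y + G y \<bullet> (z - y) + Q"
    using descent[of y "z - y"] unfolding Q_def by simp
  have v: "\<phi> z \<le> \<phi> v + G y \<bullet> (z - v) + Q"
    using up tangent[of y v] by (simp add: inner_diff_right)
  have p: "\<phi> z \<le> \<phi> p + G y \<bullet> (z - p) + Q"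
    using up tangent[of y p] by (simp add: inner_diff_right)
  have "a\<^sup>2 - a \<ge> 0" using a by (simp add: power2_eq_square)
  with v have "(a\<^sup>2 - a) * \<phi> z \<le> (a\<^sup>2 - a) * (\<phi> v + G y \<bullet> (z - v) + Q)"
    by (rule mult_left_mono)
  moreover from p a have "a * \<phi> z \<le> a * (\<phi> p + G y \<bullet> (z - p) + Q)"
    by (intro mult_left_mono) auto
  moreover have "(a\<^sup>2 - a) * (G y \<bullet> (z - v)) + a * (G y \<bullet> (z - p))
      = a * (G y \<bullet> (v + a *\<^sub>R (z - v) - p))"
    by (simp add: inner_simps power2_eq_square algebra_simps)
  ultimately have "(a\<^sup>2 - a) * \<phi> z + a * \<phi> z \<le> (a\<^sup>2 - a) * \<phi> v + a * \<phi> p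
      + a * (G y \<bullet> (v + a *\<^sub>R (z - v) - p)) + ((a\<^sup>2 - a) * Q + a * Q)"
    by (simp only: distrib_left)
  moreover have split: "(a\<^sup>2 - a) * r + a * r = a\<^sup>2 * r" for r
    by (simp add: left_diff_distrib)
  ultimately show ?thesis unfolding Q_def by (simp only: split)
qed

lemma descent_gradient_sq_le:
  fixes \<phi> :: "'a::real_inner \<Rightarrow> real"
  assumes descent: "\<And>u h. \<phi> (u + h) \<le> \<phi> u + G u \<bullet> h + L / 2 * (norm h)\<^sup>2"
    and nonneg: "\<And>u. 0 \<le> \<phi> u" and L: "L > 0"
  shows "(norm (G y))\<^sup>2 \<le> 2 * L * \<phi> y"
proof -
  have "0 \<le> \<phi> (y + (- 1 / L) *\<^sub>R G y)" by (rule nonneg)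
  also have "\<dots> \<le> \<phi> y + G y \<bullet> ((- 1 / L) *\<^sub>R G y) + L / 2 * (norm ((- 1 / L) *\<^sub>R G y))\<^sup>2"
    by (rule descent)
  also have "\<dots> = \<phi> y - (norm (G y))\<^sup>2 / (2 * L)"
    using L by (simp add: dot_square_norm power_divide field_simps power2_eq_square)
  finally show ?thesis using L by (simp add: field_simps)
qed

lemma inner_transpose_mult: "(transpose A *v v) \<bullet> h = v \<bullet> (A *v h)"
  for A :: "real^'n^'m"
  by (simp add: dot_lmul_matrix)

lemma subproblem_stationary:
  fixes A :: "real^'n^'m" and g z y :: "real^'n"
  assumes min: "\<And>u. \<phi> z \<le> \<phi> u"
    and \<phi>: "\<phi> = (\<lambda>u. g \<bullet> u + \<beta> / 2 * (norm (A *v u - b))\<^sup>2 + 1 / (2 * \<gamma>) * (norm (u - y))\<^sup>2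
                 + p \<bullet> (A *v u - b) + \<delta> / 2 * (norm (c *\<^sub>R (A *v u) - r))\<^sup>2)"
  shows "g + \<beta> *\<^sub>R (transpose A *v (A *v z - b)) + (1 / \<gamma>) *\<^sub>R (z - y) + transpose A *v p
           + (\<delta> * c) *\<^sub>R (transpose A *v (c *\<^sub>R (A *v z) - r)) = 0"
    (is "?V = 0")
proof -
  define D where "D h = g \<bullet> h + \<beta> * ((A *v z - b) \<bullet> (A *v h)) + (1 / \<gamma>) * ((z - y) \<bullet> h)
     + p \<bullet> (A *v h) + \<delta> * ((c *\<^sub>R (A *v z) - r) \<bullet> (c *\<^sub>R (A *v h)))" for h
  have "(\<phi> has_derivative D) (at z)"
    unfolding \<phi> D_def power2_norm_eq_inner
    by (rule derivative_eq_intros bounded_linear_imp_has_derivative[OF matrix_vector_mul_bounded_linear]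
          refl)+
      (simp add: fun_eq_iff inner_commute algebra_simps matrix_vector_mult_diff_distrib
        matrix_vector_right_distrib matrix_vector_mult_scaleR inner_diff_right inner_add_right)
  then have D_zero: "D = (\<lambda>h. 0)"
    by (intro differential_zero_maxmin[of z UNIV]) (use min in auto)
  have adjoint: "h \<bullet> (v v* A) = v \<bullet> (A *v h)" for h v
    by (metis dot_lmul_matrix inner_commute)
  have "D h = ?V \<bullet> h" for h
    unfolding D_def
    by (simp add: adjoint inner_simps inner_commute matrix_vector_mult_scaleR algebra_simps)
  with D_zero have "?V \<bullet> ?V = 0" by metis
  then show ?thesis by simp
qed

text \<open>The primal and dual parts of the Lyapunov function: \<open>z\<close> is the previous iterate and
  \<open>p\<close> the point \<open>z + \<sigma> t\<^sub>k (z\<^sub>k - z)\<close> obtained from it by overshooting towards the current one.\<close>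
definition anchor_energy :: "real \<Rightarrow> 'a::real_inner \<Rightarrow> 'a \<Rightarrow> 'a \<Rightarrow> real" where
  "anchor_energy \<sigma> zs z p = (norm (p - zs))\<^sup>2 / 2 + (\<sigma> - 1) / 2 * (norm (z - zs))\<^sup>2"

lemma anchor_energy_nonneg: "\<sigma> \<ge> 1 \<Longrightarrow> 0 \<le> anchor_energy \<sigma> zs z p"
  by (simp add: anchor_energy_def)

lemma anchor_energy_ge: "\<sigma> \<ge> 1 \<Longrightarrow> (norm (p - zs))\<^sup>2 / 2 \<le> anchor_energy \<sigma> zs z p"
  by (simp add: anchor_energy_def)

lemma anchor_energy_diff:
  fixes za zb zc zs :: "'a::real_inner"
  assumes "s = \<theta> * T + 1"
  shows "anchor_energy \<sigma> zs zb (zb + (\<sigma> * T) *\<^sub>R (zc - zb))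
           - anchor_energy \<sigma> zs za (za + (\<sigma> * s) *\<^sub>R (zb - za))
         = \<sigma> * T * ((zb + (\<sigma> * T) *\<^sub>R (zc - zb) - zs) \<bullet> (zc - (zb + \<theta> *\<^sub>R (zb - za))))
           - \<sigma>\<^sup>2 * T\<^sup>2 / 2 * (norm (zc - (zb + \<theta> *\<^sub>R (zb - za))))\<^sup>2
           - (\<sigma> - 1) * \<sigma> * (2 * s - 1) / 2 * (norm (zb - za))\<^sup>2"
proof -
  obtain a b c where "za = zs + a" "zb = zs + b" "zc = zs + c"
    by (metis add.commute diff_add_cancel)
  then show ?thesis
    unfolding anchor_energy_def assms power2_norm_eq_inner
    by (simp add: inner_simps inner_commute algebra_simps power2_eq_square) (simp add: field_simps)
qed

lemma anchor_energy_split: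
  fixes z p zs :: "'a::real_inner"
  shows "anchor_energy \<sigma> zs z p
    = (norm (p - z))\<^sup>2 / 2 + ((\<sigma> / 2 - 1) * (norm (z - zs))\<^sup>2 + (z - zs) \<bullet> (p - zs))"
proof -
  obtain a c where "z = zs + a" "p = zs + c"
    by (metis add.commute diff_add_cancel)
  then show ?thesis
    unfolding anchor_energy_def power2_norm_eq_inner
    by (simp add: inner_simps inner_commute algebra_simps) (simp add: field_simps)
qed

lemma inner_extrapolation_ge:
  fixes q1 q2 :: "'a::real_inner"
  assumes "c \<ge> 1"
  shows "(c + 1) / 2 * (norm q2)\<^sup>2 - (c - 1) / 2 * (norm q1)\<^sup>2 \<le> q2 \<bullet> (q1 + c *\<^sub>R (q2 - q1))"
proof -
  have "2 * (q2 \<bullet> q1) \<le> (norm q1)\<^sup>2 + (norm q2)\<^sup>2"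
    using zero_le_power2[of "norm (q2 - q1)"]
    unfolding power2_norm_eq_inner by (simp add: inner_simps inner_commute)
  with assms have "(c - 1) * (2 * (q2 \<bullet> q1)) \<le> (c - 1) * ((norm q1)\<^sup>2 + (norm q2)\<^sup>2)"
    by (intro mult_left_mono) auto
  moreover have "q2 \<bullet> (q1 + c *\<^sub>R (q2 - q1)) = (1 - c) * (q2 \<bullet> q1) + c * (norm q2)\<^sup>2"
    by (simp add: inner_simps power2_norm_eq_inner algebra_simps)
  ultimately show ?thesis by (simp add: field_simps)
qed

lemma norm_add_sq_le: "(norm (a + b))\<^sup>2 \<le> 2 * ((norm a)\<^sup>2 + (norm b)\<^sup>2)"
  for a b :: "'a::real_normed_vector"
proof -
  have "(norm (a + b))\<^sup>2 \<le> (norm a + norm b)\<^sup>2"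
    by (intro power_mono norm_triangle_ineq) auto
  also have "\<dots> \<le> 2 * ((norm a)\<^sup>2 + (norm b)\<^sup>2)"
    using zero_le_power2[of "norm a - norm b"] by (simp add: power2_eq_square algebra_simps)
  finally show ?thesis .
qed

lemma norm_add4_sq_le:
  "(norm (a + b + c + d))\<^sup>2 \<le> 4 * ((norm a)\<^sup>2 + (norm b)\<^sup>2 + (norm c)\<^sup>2 + (norm d)\<^sup>2)"
  for a b c d :: "'a::real_normed_vector"
proof -
  have "(norm (a + b + c + d))\<^sup>2 \<le> 2 * ((norm (a + b))\<^sup>2 + (norm (c + d))\<^sup>2)"
    using norm_add_sq_le[of "a + b" "c + d"] by (simp add: add.assoc)
  then show ?thesis using norm_add_sq_le[of a b] norm_add_sq_le[of c d] by (smt (verit))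
qed

lemma inner_tendsto_zero_bounded:
  fixes e u :: "nat \<Rightarrow> 'a::real_inner"
  assumes e: "e \<longlonglongrightarrow> 0" and u: "\<And>n. norm (u n) \<le> M"
  shows "(\<lambda>n. e n \<bullet> u n) \<longlonglongrightarrow> 0"
proof (rule Lim_null_comparison)
  show "\<forall>\<^sub>F n in sequentially. norm (e n \<bullet> u n) \<le> norm (e n) * M"
  proof (intro always_eventually allI)
    fix n
    have "\<bar>e n \<bullet> u n\<bar> \<le> norm (e n) * norm (u n)" by (rule Cauchy_Schwarz_ineq2)
    also have "\<dots> \<le> norm (e n) * M" using u by (rule mult_left_mono) simp
    finally show "norm (e n \<bullet> u n) \<le> norm (e n) * M" by simp
  qed
  show "(\<lambda>n. norm (e n) * M) \<longlonglongrightarrow> 0"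
    using tendsto_mult_left_zero[OF tendsto_norm_zero[OF e]] .
qed

lemma norm_extrap_diff_le:
  fixes z :: "nat \<Rightarrow> 'a::real_normed_vector"
  assumes "0 \<le> t k - 1" "t k \<le> t (Suc k)"
  shows "norm (extrap t z k - z k) \<le> norm (z k - z (k - 1))"
proof -
  have "0 \<le> (t k - 1) / t (Suc k)" "(t k - 1) / t (Suc k) \<le> 1"
    using assms by (simp_all add: divide_le_eq_1)
  moreover have "extrap t z k - z k = ((t k - 1) / t (Suc k)) *\<^sub>R (z k - z (k - 1))"
    by (simp add: extrap_def)
  ultimately show ?thesis by (simp only: norm_scaleR abs_of_nonneg mult_left_le_one_le norm_ge_zero)
qed

lemma summable_decrement:
  fixes E r :: "nat \<Rightarrow> real"
  assumes "\<And>n. 0 \<le> E n" and "\<And>n. E (Suc n) + r n \<le> E n" and "\<And>n. 0 \<le> r n"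
  shows "summable r"
proof (rule summableI_nonneg_bounded[where x = "E 0"])
  fix n
  have "E n + (\<Sum>i<n. r i) \<le> E 0"
    by (induction n) (use assms(2) in \<open>auto intro: order_trans[rotated]\<close>)
  then show "(\<Sum>i<n. r i) \<le> E 0" using assms(1)[of n] by linarith
qed (use assms(3) in auto)

lemma summable_scaled_bound:
  fixes u r :: "nat \<Rightarrow> real"
  assumes "summable r" and "c > 0" and "\<And>n. n \<ge> N \<Longrightarrow> 0 \<le> u n \<and> c * u n \<le> r n"
  shows "summable u"
proof (rule summable_comparison_test'[OF summable_mult[OF assms(1), of "1 / c"]])
  show "norm (u n) \<le> 1 / c * r n" if "n \<ge> N" for n
    using assms(2) assms(3)[OF that] by (simp add: field_simps)
qed

lemma weighted_summable_limit_eq_zero: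
  fixes z a :: "nat \<Rightarrow> real"
  assumes lim: "z \<longlonglongrightarrow> c" and z: "\<And>n. 0 \<le> z n" and a: "\<And>n. 0 \<le> a n"
    and diverge: "\<not> summable a" and summable: "summable (\<lambda>n. a n * z n)"
  shows "c = 0"
proof (rule ccontr)
  assume "c \<noteq> 0"
  moreover have "c \<ge> 0" using LIMSEQ_le_const[OF lim] z by blast
  ultimately have c: "c > 0" by simp
  then have "\<forall>\<^sub>F n in sequentially. z n > c / 2"
    using lim by (intro order_tendstoD(1)) auto
  then have "\<forall>\<^sub>F n in sequentially. norm (a n) \<le> (2 / c) * (a n * z n)"
  proof eventually_elim
    case (elim n)
    have "a n * (c / 2) \<le> a n * z n" using elim a[of n] by (intro mult_left_mono) auto
    then show ?case using c a[of n] by (simp add: field_simps)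
  qed
  then have "summable a" using summable_mult[OF summable] by (rule summable_comparison_test_ev)
  with diverge show False ..
qed

lemma quasi_fejer:
  fixes z d e :: "nat \<Rightarrow> real"
  assumes z: "\<And>n. 0 \<le> z n" and d: "\<And>n. 0 \<le> d n" and e: "\<And>n. 0 \<le> e n" "summable e"
    and step: "\<And>n. z (Suc n) + d n \<le> z n + e n"
  shows "summable d" and "convergent z"
proof -
  define tail where "tail n = suminf e - (\<Sum>i<n. e i)" for n
  have tail_nonneg: "0 \<le> tail n" for n
    using sum_le_suminf[OF e(2), of "{..<n}"] e(1) unfolding tail_def by force
  have E_step: "z (Suc n) + tail (Suc n) + d n \<le> z n + tail n" for n
    using step[of n] unfolding tail_def by simp
  show "summable d"
    by (rule summable_decrement[where E = "\<lambda>n. z n + tail n", OF _ E_step d])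
      (use z tail_nonneg in \<open>simp add: add_nonneg_nonneg\<close>)
  have "decseq (\<lambda>n. z n + tail n)"
  proof (rule decseq_SucI)
    show "z (Suc n) + tail (Suc n) \<le> z n + tail n" for n using E_step[of n] d[of n] by linarith
  qed
  moreover have "\<forall>n. 0 \<le> z n + tail n" using z tail_nonneg by (simp add: add_nonneg_nonneg)
  ultimately obtain c where lim: "(\<lambda>n. z n + tail n) \<longlonglongrightarrow> c"
    by (rule decseq_convergent)
  have "tail \<longlonglongrightarrow> 0"
    unfolding tail_def using tendsto_diff[OF tendsto_const[of "suminf e"] summable_LIMSEQ[OF e(2)]]
    by simp
  from tendsto_diff[OF lim this] show "convergent z" by (auto simp: convergent_def)
qed

lemma perturbed_contraction_sq_le:
  fixes h h' e w :: real
  assumes h: "0 \<le> h" "0 \<le> h'" and e: "0 < e" "e \<le> 1" and w: "0 \<le> w"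
    and step: "h' \<le> (1 - e) * h + w"
  shows "h'\<^sup>2 \<le> h\<^sup>2 - e / 2 * h\<^sup>2 + 3 / e * w\<^sup>2"
proof -
  have "h'\<^sup>2 \<le> ((1 - e) * h + w)\<^sup>2" using step h by (intro power_mono) auto
  also have "\<dots> = (1 - e) * ((1 - e) * h\<^sup>2) + 2 * ((1 - e) * h) * w + w\<^sup>2"
    by (simp add: power2_eq_square algebra_simps)
  also have "\<dots> \<le> (1 - e) * h\<^sup>2 + (e / 2 * h\<^sup>2 + 2 / e * w\<^sup>2) + w\<^sup>2 / e"
  proof -
    have "(1 - e) * ((1 - e) * h\<^sup>2) \<le> (1 - e) * h\<^sup>2"
      using e by (intro mult_left_mono) (auto simp: mult_left_le_one_le)
    moreover have "2 * ((1 - e) * h) * w \<le> 2 * h * w"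
      using e h w by (intro mult_right_mono mult_left_mono) (auto simp: mult_left_le_one_le)
    moreover have "2 * h * w \<le> e / 2 * h\<^sup>2 + 2 / e * w\<^sup>2"
    proof -
      have "0 \<le> e / 2 * (h - 2 / e * w)\<^sup>2" using e by simp
      also have "\<dots> = e / 2 * h\<^sup>2 + 2 / e * w\<^sup>2 - 2 * h * w"
        using e by (simp add: power2_eq_square field_simps)
      finally show ?thesis by simp
    qed
    moreover have "w\<^sup>2 \<le> w\<^sup>2 / e" using e by (simp add: le_divide_eq mult_left_le)
    ultimately show ?thesis by linarith
  qed
  also have "\<dots> = h\<^sup>2 - e / 2 * h\<^sup>2 + 3 / e * w\<^sup>2"
    using e by (simp add: field_simps)
  finally show ?thesis .
qed

lemma perturbed_contraction_tendsto_zero: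
  fixes h a w :: "nat \<Rightarrow> real"
  assumes h: "\<And>n. 0 \<le> h n" and a: "\<And>n. 0 < a n" "\<And>n. a n \<le> 1" and c: "0 < c" "c \<le> 1"
    and step: "\<And>n. h (Suc n) \<le> (1 - c * a n) * h n + w n" and w: "\<And>n. 0 \<le> w n"
    and w_summable: "summable (\<lambda>n. (w n)\<^sup>2 / a n)" and diverge: "\<not> summable a"
  shows "h \<longlonglongrightarrow> 0" and "summable (\<lambda>n. a n * (h n)\<^sup>2)"
proof -
  define e where "e n = 3 / c * ((w n)\<^sup>2 / a n)" for n
  have sq_step: "(h (Suc n))\<^sup>2 + c / 2 * (a n * (h n)\<^sup>2) \<le> (h n)\<^sup>2 + e n" for n
  proof -
    have "0 < c * a n" "c * a n \<le> 1"
      using a[of n] c mult_mono[of c 1 "a n" 1] by auto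
    from perturbed_contraction_sq_le[OF h[of n] h[of "Suc n"] this w[of n] step[of n]]
    show ?thesis using a(1)[of n] c unfolding e_def by (simp add: field_simps)
  qed
  have e_summable: "summable e" unfolding e_def using w_summable by (rule summable_mult)
  have "0 \<le> c / 2 * (a n * (h n)\<^sup>2)" "0 \<le> e n" for n
    using a(1)[of n] c unfolding e_def by simp_all
  from quasi_fejer[OF _ this e_summable sq_step]
  have "summable (\<lambda>n. c / 2 * (a n * (h n)\<^sup>2))" and conv: "convergent (\<lambda>n. (h n)\<^sup>2)"
    by simp_all
  from summable_mult[OF this(1), of "2 / c"] c
  show summable: "summable (\<lambda>n. a n * (h n)\<^sup>2)" by simp
  from conv obtain l where lim: "(\<lambda>n. (h n)\<^sup>2) \<longlonglongrightarrow> l" by (auto simp: convergent_def)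
  moreover have "l = 0"
    using weighted_summable_limit_eq_zero[OF lim _ _ diverge summable] a(1) by (simp add: less_imp_le)
  ultimately have "(\<lambda>n. sqrt ((h n)\<^sup>2)) \<longlonglongrightarrow> sqrt 0" by (intro tendsto_real_sqrt) simp
  then show "h \<longlonglongrightarrow> 0" using h by simp
qed

locale aalm_case_two =
  fixes f :: "real^'n \<Rightarrow> real" and gf :: "real^'n \<Rightarrow> real^'n"
    and A :: "real^'n^'m" and b :: "real^'m"
    and L \<rho> \<eta> \<gamma> \<delta> \<beta> :: real and t :: "nat \<Rightarrow> real"
    and x :: "nat \<Rightarrow> real^'n" and l :: "nat \<Rightarrow> real^'m"
    and xs :: "real^'n" and ls :: "real^'m"
  assumes f_convex: "convex_on UNIV f"
    and f_grad: "\<And>z. (f has_derivative (\<lambda>h. gf z \<bullet> h)) (at z)"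
    and L_pos: "L > 0"
    and grad_lip: "\<And>y z. norm (gf y - gf z) \<le> L * norm (y - z)"
    and t_mono: "\<And>k. k \<ge> 1 \<Longrightarrow> t k \<le> t (Suc k)"
    and t_1: "t 1 = 1"
    and t_growth: "\<And>k. k \<ge> 1 \<Longrightarrow> (t (Suc k))\<^sup>2 - (t k)\<^sup>2 \<le> \<rho> * t (Suc k)"
    and rho: "0 < \<rho>"
    and eta: "\<rho> < \<eta>" "\<eta> < 1"
    and gamma: "\<gamma> > 0" "\<gamma> \<le> 1 / L"
    and delta: "\<delta> > 0"
    and beta: "\<beta> \<ge> 0"
    and x_step: "\<And>k y. k \<ge> 1 \<Longrightarrow>
        subproblem_obj gf A b t \<eta> \<gamma> \<delta> \<beta> x l k (x (Suc k))
          \<le> subproblem_obj gf A b t \<eta> \<gamma> \<delta> \<beta> x l k y"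
    and l_step: "\<And>k. k \<ge> 1 \<Longrightarrow>
        l (Suc k) = extrap t l k + \<delta> *\<^sub>R (c_k t \<eta> k *\<^sub>R (A *v x (Suc k))
                     - (alpha_k t \<eta> k *\<^sub>R (A *v x k) + b))"
    and lim_x: "x \<longlonglongrightarrow> xs"
    and lim_l: "l \<longlonglongrightarrow> ls"
    and lim_KKT: "(xs, ls) \<in> KKT_set gf A b"
begin

definition \<sigma> :: real where "\<sigma> = 1 / \<eta>"

definition gap :: "real^'n \<Rightarrow> real" where "gap y = f y - f xs + ls \<bullet> (A *v y - b)"

text \<open>With \<open>\<sigma> = 1/\<eta>\<close> the parameters of the method are \<open>c_k = \<sigma> t\<^sub>k\<^sub>+\<^sub>1\<close> and
  \<open>alpha_k = c_k - 1\<close>; hence the multiplier update is driven by \<open>A w\<^sub>k - b\<close> and the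
  optimality condition of the \<open>x\<close>-subproblem involves \<open>A\<^sup>T mu\<^sub>k\<close>.\<close>
definition w :: "nat \<Rightarrow> real^'n" where "w k = x k + (\<sigma> * t (Suc k)) *\<^sub>R (x (Suc k) - x k)"

definition mu :: "nat \<Rightarrow> real^'m" where "mu k = l k + (\<sigma> * t (Suc k)) *\<^sub>R (l (Suc k) - l k)"

lemma eta_pos: "\<eta> > 0"
  using rho eta by linarith

lemma sigma_gt_1: "\<sigma> > 1"
  using eta eta_pos by (simp add: \<sigma>_def)

lemma sigma_rho_lt_1: "\<sigma> * \<rho> < 1"
  using eta eta_pos by (simp add: \<sigma>_def)

lemma t_ge_1: "k \<ge> 1 \<Longrightarrow> t k \<ge> 1"
proof (induction k rule: dec_induct)
  case base then show ?case using t_1 by simp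
next
  case (step n) then show ?case using t_mono[of n] by linarith
qed

lemma t_Suc_le: assumes "k \<ge> 1" shows "t (Suc k) \<le> t k + \<rho>"
proof -
  have t: "t k \<ge> 1" "t (Suc k) \<ge> 1" using t_ge_1 assms by auto
  have "(t (Suc k) - t k) * (t (Suc k) + t k) \<le> \<rho> * t (Suc k)"
    using t_growth[OF assms] by (simp add: power2_eq_square algebra_simps)
  also have "\<dots> \<le> \<rho> * (t (Suc k) + t k)" using rho t by simp
  finally show ?thesis using t by (simp add: mult_le_cancel_right)
qed

lemma t_Suc_le_double: "k \<ge> 1 \<Longrightarrow> t (Suc k) \<le> 2 * t k"
  using t_Suc_le t_ge_1 eta by fastforce

lemma t_le_real: "k \<ge> 1 \<Longrightarrow> t k \<le> real k"
proof (induction k rule: dec_induct)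
  case base then show ?case using t_1 by simp
next
  case (step n) then show ?case using t_Suc_le[of n] eta by simp
qed

lemma not_summable_inverse_t: "\<not> summable (\<lambda>k. 1 / t (Suc k))"
proof
  assume "summable (\<lambda>k. 1 / t (Suc k))"
  moreover have "norm (1 / real (Suc k)) \<le> 1 / t (Suc k)" for k
    using t_le_real[of "Suc k"] t_ge_1[of "Suc k"] by (simp add: frac_le)
  ultimately have "summable (\<lambda>k. 1 / real (Suc k))"
    by (rule summable_comparison_test')
  then have "summable (\<lambda>k. 1 / real k)"
    by (rule summable_Suc_iff[THEN iffD1, of "\<lambda>k. 1 / real k"])
  then show False
    using not_summable_harmonic[where 'a = real] by (simp add: inverse_eq_divide)
qed

lemma KKT: "A *v xs = b" "gf xs + transpose A *v ls = 0"
  using lim_KKT by (auto simp: KKT_set_def)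

lemma gap_tangent: "gap u + (gf u + transpose A *v ls) \<bullet> (v - u) \<le> gap v"
  using convex_on_gradient_ineq[OF f_convex f_grad, of u v]
  by (simp add: gap_def inner_simps dot_lmul_matrix matrix_vector_mult_diff_distrib)

lemma gap_descent: "gap (u + h) \<le> gap u + (gf u + transpose A *v ls) \<bullet> h + L / 2 * (norm h)\<^sup>2"
  using lipschitz_gradient_upper_bound[OF f_grad grad_lip, of u h]
  by (simp add: gap_def inner_simps dot_lmul_matrix matrix_vector_right_distrib)

lemma gap_xs: "gap xs = 0"
  by (simp add: gap_def KKT)

lemma gap_nonneg: "gap y \<ge> 0"
  using gap_tangent[of xs y] KKT(2) by (simp add: gap_xs)

lemma gradient_gap_bound: "(norm (gf y - gf xs))\<^sup>2 \<le> 2 * L * gap y"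
proof -
  have "gf y + transpose A *v ls = gf y - gf xs"
    using KKT(2) by (simp add: eq_neg_iff_add_eq_0 algebra_simps)
  moreover have "(norm (gf y + transpose A *v ls))\<^sup>2 \<le> 2 * L * gap y"
    by (rule descent_gradient_sq_le[OF gap_descent gap_nonneg L_pos])
  ultimately show ?thesis by simp
qed

lemma l_step_w: "k \<ge> 1 \<Longrightarrow> l (Suc k) = extrap t l k + \<delta> *\<^sub>R (A *v w k - b)"
  using l_step[of k] eta_pos
  by (simp add: w_def c_k_def alpha_k_def \<sigma>_def matrix_vector_right_distrib
      matrix_vector_mult_diff_distrib matrix_vector_mult_scaleR diff_divide_distrib algebra_simps)

lemma stationarity:
  assumes "k \<ge> 1"
  shows "gf (extrap t x k) + \<beta> *\<^sub>R (transpose A *v (A *v x (Suc k) - b))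
     + (1 / \<gamma>) *\<^sub>R (x (Suc k) - extrap t x k) + transpose A *v mu k = 0"
proof -
  define c where "c = c_k t \<eta> k"
  define r where "r = alpha_k t \<eta> k *\<^sub>R (A *v x k) + b"
  define p where "p = c *\<^sub>R extrap t l k - alpha_k t \<eta> k *\<^sub>R l k"
  have "gf (extrap t x k) + \<beta> *\<^sub>R (transpose A *v (A *v x (Suc k) - b))
      + (1 / \<gamma>) *\<^sub>R (x (Suc k) - extrap t x k) + transpose A *v p
      + (\<delta> * c) *\<^sub>R (transpose A *v (c *\<^sub>R (A *v x (Suc k)) - r)) = 0"
    by (rule subproblem_stationary[where \<phi> = "subproblem_obj gf A b t \<eta> \<gamma> \<delta> \<beta> x l k",
          OF x_step[OF assms]])
      (simp add: subproblem_obj_def Let_def p_def r_def c_def fun_eq_iff)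
  moreover have "p + (\<delta> * c) *\<^sub>R (c *\<^sub>R (A *v x (Suc k)) - r) = mu k"
  proof -
    have step: "\<delta> *\<^sub>R (c *\<^sub>R (A *v x (Suc k)) - r) = l (Suc k) - extrap t l k"
      using l_step[OF assms] by (simp add: c_def r_def)
    have alpha: "alpha_k t \<eta> k = c - 1"
      using eta_pos by (simp add: alpha_k_def c_def c_k_def diff_divide_distrib)
    have "p + (\<delta> * c) *\<^sub>R (c *\<^sub>R (A *v x (Suc k)) - r)
        = p + c *\<^sub>R (\<delta> *\<^sub>R (c *\<^sub>R (A *v x (Suc k)) - r))"
      by simp
    also have "\<dots> = c *\<^sub>R l (Suc k) - (c - 1) *\<^sub>R l k"
      unfolding step p_def alpha by (simp add: algebra_simps)
    also have "\<dots> = mu k"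
      by (simp add: mu_def c_def c_k_def \<sigma>_def algebra_simps)
    finally show ?thesis .
  qed
  then have "transpose A *v p + (\<delta> * c) *\<^sub>R (transpose A *v (c *\<^sub>R (A *v x (Suc k)) - r))
      = transpose A *v mu k"
    by (metis matrix_vector_mult_scaleR matrix_vector_right_distrib)
  ultimately show ?thesis by (simp add: add.assoc)
qed

lemma sigma_t_ge_1: "k \<ge> 1 \<Longrightarrow> \<sigma> * t k \<ge> 1"
  using mult_mono[of 1 \<sigma> 1 "t k"] sigma_gt_1 t_ge_1[of k] by simp

lemma w_mu_pred:
  assumes "k \<ge> 1"
  shows "w (k - 1) = x (k - 1) + (\<sigma> * t k) *\<^sub>R (x k - x (k - 1))"
    and "mu (k - 1) = l (k - 1) + (\<sigma> * t k) *\<^sub>R (l k - l (k - 1))"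
  using assms by (simp_all add: w_def mu_def)

lemma stationarity_inner:
  assumes "k \<ge> 1"
  shows "(gf (extrap t x k) + transpose A *v ls) \<bullet> (w k - xs)
     = - (\<beta> * ((A *v x (Suc k) - b) \<bullet> (A *v w k - b)))
       - (1 / \<gamma>) * ((w k - xs) \<bullet> (x (Suc k) - extrap t x k))
       - (mu k - ls) \<bullet> (A *v w k - b)"
proof -
  have "gf (extrap t x k) + transpose A *v ls
      + (\<beta> *\<^sub>R (transpose A *v (A *v x (Suc k) - b)) + (1 / \<gamma>) *\<^sub>R (x (Suc k) - extrap t x k)
         + transpose A *v (mu k - ls)) = 0"
    using stationarity[OF assms] by (simp add: matrix_vector_mult_diff_distrib algebra_simps)
  then have "gf (extrap t x k) + transpose A *v ls
      = - (\<beta> *\<^sub>R (transpose A *v (A *v x (Suc k) - b)) + (1 / \<gamma>) *\<^sub>R (x (Suc k) - extrap t x k)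
           + transpose A *v (mu k - ls))"
    by (simp only: eq_neg_iff_add_eq_0)
  moreover have "A *v (w k - xs) = A *v w k - b"
    using KKT(1) by (simp add: matrix_vector_mult_diff_distrib)
  ultimately show ?thesis
    by (simp only: inner_minus_left inner_add_left inner_scaleR_left inner_transpose_mult
        inner_commute[of "x (Suc k) - extrap t x k"])
qed

lemma gap_step:
  assumes k: "k \<ge> 1"
  defines "a \<equiv> \<sigma> * t (Suc k)" and "e \<equiv> x (Suc k) - extrap t x k" and "v \<equiv> A *v w k - b"
  shows "a\<^sup>2 * gap (x (Suc k))
    \<le> (a\<^sup>2 - a) * gap (x k) - a * \<beta> * ((A *v x (Suc k) - b) \<bullet> v) - a / \<gamma> * ((w k - xs) \<bullet> e)
      - a * ((mu k - ls) \<bullet> v) + a\<^sup>2 / (2 * \<gamma>) * (norm e)\<^sup>2"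
proof -
  define G where "G = (gf (extrap t x k) + transpose A *v ls) \<bullet> (w k - xs)"
  have "a\<^sup>2 * gap (x (Suc k)) \<le> (a\<^sup>2 - a) * gap (x k) + a * G + a\<^sup>2 * (L / 2 * (norm e)\<^sup>2)"
    using convex_smooth_three_point[OF gap_tangent gap_descent sigma_t_ge_1[of "Suc k"],
        where z = "x (Suc k)" and v = "x k" and p = xs and y = "extrap t x k"]
    unfolding G_def a_def e_def by (simp add: gap_xs w_def)
  moreover have "L / 2 \<le> 1 / (2 * \<gamma>)" using gamma L_pos by (simp add: field_simps)
  then have "a\<^sup>2 * (L / 2 * (norm e)\<^sup>2) \<le> a\<^sup>2 * (1 / (2 * \<gamma>) * (norm e)\<^sup>2)"
    by (intro mult_left_mono mult_right_mono) simp_all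
  moreover have "a * G = - (a * \<beta> * ((A *v x (Suc k) - b) \<bullet> v)) - a / \<gamma> * ((w k - xs) \<bullet> e)
      - a * ((mu k - ls) \<bullet> v)"
    using stationarity_inner[OF k] unfolding G_def[symmetric] v_def[symmetric] e_def[symmetric]
    by (simp add: right_diff_distrib)
  ultimately show ?thesis by simp
qed

lemma infeasibility_step:
  assumes k: "k \<ge> 1"
  defines "q \<equiv> A *v x k - b" and "q' \<equiv> A *v x (Suc k) - b"
  shows "\<beta> * \<sigma> * t (Suc k) * (\<sigma> * t (Suc k) + 1) / 2 * (norm q')\<^sup>2
      - \<sigma> * t (Suc k) * \<beta> * (q' \<bullet> (A *v w k - b))
    \<le> \<beta> * \<sigma> * t k * (\<sigma> * t k + 1) / 2 * (norm q)\<^sup>2 - \<beta> * \<sigma> * t k / 2 * (norm q)\<^sup>2"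
proof -
  define a where "a = \<sigma> * t (Suc k)"
  have "A *v w k - b = q + a *\<^sub>R (q' - q)"
    by (simp add: w_def q_def q'_def a_def matrix_vector_right_distrib matrix_vector_mult_diff_distrib
        matrix_vector_mult_scaleR)
  then have "\<beta> * a * ((a + 1) / 2 * (norm q')\<^sup>2 - (a - 1) / 2 * (norm q)\<^sup>2) \<le> \<beta> * a * (q' \<bullet> (A *v w k - b))"
    using inner_extrapolation_ge[OF sigma_t_ge_1[of "Suc k"]] beta sigma_t_ge_1[of "Suc k"]
    unfolding a_def by (intro mult_left_mono) simp_all
  then have "\<beta> * a * (a + 1) / 2 * (norm q')\<^sup>2 - a * \<beta> * (q' \<bullet> (A *v w k - b))
      \<le> \<beta> / 2 * (norm q)\<^sup>2 * (a\<^sup>2 - a)"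
    by (simp add: field_simps power2_eq_square)
  also have "\<dots> \<le> \<beta> / 2 * (norm q)\<^sup>2 * (\<sigma> * t k)\<^sup>2"
  proof (rule mult_left_mono)
    have "\<sigma>\<^sup>2 * ((t (Suc k))\<^sup>2 - (t k)\<^sup>2) \<le> \<sigma>\<^sup>2 * (\<rho> * t (Suc k))"
      using t_growth[OF k] by (rule mult_left_mono) simp
    also have "\<dots> \<le> \<sigma> * t (Suc k)"
      using sigma_rho_lt_1 sigma_gt_1 t_ge_1[of "Suc k"] by (simp add: power2_eq_square)
    finally show "a\<^sup>2 - a \<le> (\<sigma> * t k)\<^sup>2"
      unfolding a_def by (simp add: power_mult_distrib algebra_simps)
  qed (use beta in simp)
  also have "\<dots> = \<beta> * \<sigma> * t k * (\<sigma> * t k + 1) / 2 * (norm q)\<^sup>2 - \<beta> * \<sigma> * t k / 2 * (norm q)\<^sup>2"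
    by (simp add: field_simps power2_eq_square)
  finally show ?thesis unfolding a_def by (simp add: mult_ac)
qed

lemma anchor_energy_step:
  fixes z :: "nat \<Rightarrow> 'a::real_inner"
  assumes "k \<ge> 1"
  shows "anchor_energy \<sigma> zs (z k) (z k + (\<sigma> * t (Suc k)) *\<^sub>R (z (Suc k) - z k))
           - anchor_energy \<sigma> zs (z (k - 1)) (z (k - 1) + (\<sigma> * t k) *\<^sub>R (z k - z (k - 1)))
         = \<sigma> * t (Suc k) * ((z k + (\<sigma> * t (Suc k)) *\<^sub>R (z (Suc k) - z k) - zs) \<bullet> (z (Suc k) - extrap t z k))
           - (\<sigma> * t (Suc k))\<^sup>2 / 2 * (norm (z (Suc k) - extrap t z k))\<^sup>2
           - (\<sigma> - 1) * \<sigma> * (2 * t k - 1) / 2 * (norm (z k - z (k - 1)))\<^sup>2"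
proof -
  have "t k = (t k - 1) / t (Suc k) * t (Suc k) + 1"
    using t_ge_1[of "Suc k"] by simp
  from anchor_energy_diff[OF this, of \<sigma> zs "z k" "z (Suc k)" "z (k - 1)"]
  show ?thesis by (simp add: extrap_def power_mult_distrib)
qed

lemma dual_energy_step:
  assumes k: "k \<ge> 1"
  shows "anchor_energy \<sigma> ls (l k) (mu k) / \<delta> - anchor_energy \<sigma> ls (l (k - 1)) (mu (k - 1)) / \<delta>
    \<le> \<sigma> * t (Suc k) * ((mu k - ls) \<bullet> (A *v w k - b))
      - (\<sigma> - 1) * \<sigma> * (2 * t k - 1) / (2 * \<delta>) * (norm (l k - l (k - 1)))\<^sup>2"
proof -
  define a v where "a = \<sigma> * t (Suc k)" and "v = A *v w k - b"
  have diff: "anchor_energy \<sigma> ls (l k) (mu k) - anchor_energy \<sigma> ls (l (k - 1)) (mu (k - 1))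
      = a * ((mu k - ls) \<bullet> (\<delta> *\<^sub>R v)) - a\<^sup>2 / 2 * (norm (\<delta> *\<^sub>R v))\<^sup>2
        - (\<sigma> - 1) * \<sigma> * (2 * t k - 1) / 2 * (norm (l k - l (k - 1)))\<^sup>2"
    using anchor_energy_step[OF k, of ls l] l_step_w[OF k] unfolding w_mu_pred[OF k]
    by (simp add: mu_def a_def v_def)
  have "anchor_energy \<sigma> ls (l k) (mu k) / \<delta> - anchor_energy \<sigma> ls (l (k - 1)) (mu (k - 1)) / \<delta>
      = a * ((mu k - ls) \<bullet> v) - \<delta> * (a\<^sup>2 / 2 * (norm v)\<^sup>2)
        - (\<sigma> - 1) * \<sigma> * (2 * t k - 1) / (2 * \<delta>) * (norm (l k - l (k - 1)))\<^sup>2"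
    unfolding diff_divide_distrib[symmetric] diff using delta
    by (simp add: power_mult_distrib power2_eq_square field_simps)
  moreover have "0 \<le> \<delta> * (a\<^sup>2 / 2 * (norm v)\<^sup>2)" using delta by simp
  ultimately show ?thesis unfolding a_def v_def by linarith
qed

definition energy :: "nat \<Rightarrow> real" where
  "energy k = (\<sigma> * t k)\<^sup>2 * gap (x k) + \<beta> * \<sigma> * t k * (\<sigma> * t k + 1) / 2 * (norm (A *v x k - b))\<^sup>2
     + anchor_energy \<sigma> xs (x (k - 1)) (w (k - 1)) / \<gamma>
     + anchor_energy \<sigma> ls (l (k - 1)) (mu (k - 1)) / \<delta>"

definition dissipation :: "nat \<Rightarrow> real" where
  "dissipation k = \<sigma> * (1 - \<sigma> * \<rho>) * t (Suc k) * gap (x k)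
     + \<beta> * \<sigma> * t k / 2 * (norm (A *v x k - b))\<^sup>2
     + (\<sigma> - 1) * \<sigma> * t k / (2 * \<gamma>) * (norm (x k - x (k - 1)))\<^sup>2
     + (\<sigma> - 1) * \<sigma> * t k / (2 * \<delta>) * (norm (l k - l (k - 1)))\<^sup>2"

lemma energy_decrease:
  assumes k: "k \<ge> 1"
  shows "energy (Suc k) + dissipation k \<le> energy k"
proof -
  have primal: "anchor_energy \<sigma> xs (x k) (w k) / \<gamma> - anchor_energy \<sigma> xs (x (k - 1)) (w (k - 1)) / \<gamma>
      = \<sigma> * t (Suc k) / \<gamma> * ((w k - xs) \<bullet> (x (Suc k) - extrap t x k))
        - (\<sigma> * t (Suc k))\<^sup>2 / (2 * \<gamma>) * (norm (x (Suc k) - extrap t x k))\<^sup>2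
        - (\<sigma> - 1) * \<sigma> * (2 * t k - 1) / (2 * \<gamma>) * (norm (x k - x (k - 1)))\<^sup>2"
    using anchor_energy_step[OF k, of xs x] unfolding w_mu_pred[OF k] diff_divide_distrib[symmetric]
    by (simp add: w_def diff_divide_distrib)
  have growth: "((\<sigma> * t (Suc k))\<^sup>2 - \<sigma> * t (Suc k)) * gap (x k)
      \<le> (\<sigma> * t k)\<^sup>2 * gap (x k) - \<sigma> * (1 - \<sigma> * \<rho>) * t (Suc k) * gap (x k)"
  proof -
    have "\<sigma>\<^sup>2 * ((t (Suc k))\<^sup>2 - (t k)\<^sup>2) \<le> \<sigma>\<^sup>2 * (\<rho> * t (Suc k))"
      using t_growth[OF k] by (rule mult_left_mono) simp
    then have "(\<sigma> * t (Suc k))\<^sup>2 - \<sigma> * t (Suc k) \<le> (\<sigma> * t k)\<^sup>2 - \<sigma> * (1 - \<sigma> * \<rho>) * t (Suc k)"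
      by (simp add: power_mult_distrib algebra_simps power2_eq_square)
    from mult_right_mono[OF this gap_nonneg] show ?thesis by (simp add: left_diff_distrib)
  qed
  have weights: "(\<sigma> - 1) * \<sigma> * t k / (2 * c) * n \<le> (\<sigma> - 1) * \<sigma> * (2 * t k - 1) / (2 * c) * n"
    if "c > 0" "n \<ge> 0" for c n
    using sigma_gt_1 t_ge_1[OF k] that by (intro mult_right_mono divide_right_mono mult_left_mono) auto
  have "energy (Suc k) = (\<sigma> * t (Suc k))\<^sup>2 * gap (x (Suc k))
      + \<beta> * \<sigma> * t (Suc k) * (\<sigma> * t (Suc k) + 1) / 2 * (norm (A *v x (Suc k) - b))\<^sup>2
      + anchor_energy \<sigma> xs (x k) (w k) / \<gamma> + anchor_energy \<sigma> ls (l k) (mu k) / \<delta>"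
    by (simp add: energy_def)
  then show ?thesis
    using gap_step[OF k] infeasibility_step[OF k] dual_energy_step[OF k] primal growth
      weights[OF gamma(1) zero_le_power2, of "norm (x k - x (k - 1))"]
      weights[OF delta zero_le_power2, of "norm (l k - l (k - 1))"]
    unfolding energy_def[of k] dissipation_def by linarith
qed

lemma energy_nonneg: "k \<ge> 1 \<Longrightarrow> 0 \<le> energy k"
  using gap_nonneg[of "x k"] beta sigma_gt_1 gamma delta t_ge_1[of k]
    anchor_energy_nonneg[OF less_imp_le[OF sigma_gt_1], of xs "x (k - 1)" "w (k - 1)"]
    anchor_energy_nonneg[OF less_imp_le[OF sigma_gt_1], of ls "l (k - 1)" "mu (k - 1)"]
  unfolding energy_def by (intro add_nonneg_nonneg divide_nonneg_pos mult_nonneg_nonneg) auto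

lemma dissipation_terms_nonneg:
  assumes "k \<ge> 1"
  shows "0 \<le> t (Suc k) * gap (x k)" "0 \<le> t k * (\<beta> * (norm (A *v x k - b))\<^sup>2)"
    "0 \<le> t k * (norm (x k - x (k - 1)))\<^sup>2" "0 \<le> t k * (norm (l k - l (k - 1)))\<^sup>2"
  using gap_nonneg[of "x k"] beta t_ge_1[OF assms] t_ge_1[of "Suc k"] by simp_all

lemma dissipation_eq:
  "dissipation k = \<sigma> * (1 - \<sigma> * \<rho>) * (t (Suc k) * gap (x k))
     + \<sigma> / 2 * (t k * (\<beta> * (norm (A *v x k - b))\<^sup>2))
     + (\<sigma> - 1) * \<sigma> / (2 * \<gamma>) * (t k * (norm (x k - x (k - 1)))\<^sup>2)
     + (\<sigma> - 1) * \<sigma> / (2 * \<delta>) * (t k * (norm (l k - l (k - 1)))\<^sup>2)"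
  by (simp add: dissipation_def field_simps)

lemma dissipation_coefficients_pos:
  "0 < \<sigma> * (1 - \<sigma> * \<rho>)" "0 < \<sigma> / 2" "0 < (\<sigma> - 1) * \<sigma> / (2 * \<gamma>)" "0 < (\<sigma> - 1) * \<sigma> / (2 * \<delta>)"
  using sigma_gt_1 sigma_rho_lt_1 gamma delta by simp_all

lemma dissipation_parts_nonneg:
  assumes "k \<ge> 1"
  shows "0 \<le> \<sigma> * (1 - \<sigma> * \<rho>) * (t (Suc k) * gap (x k))"
    "0 \<le> \<sigma> / 2 * (t k * (\<beta> * (norm (A *v x k - b))\<^sup>2))"
    "0 \<le> (\<sigma> - 1) * \<sigma> / (2 * \<gamma>) * (t k * (norm (x k - x (k - 1)))\<^sup>2)"
    "0 \<le> (\<sigma> - 1) * \<sigma> / (2 * \<delta>) * (t k * (norm (l k - l (k - 1)))\<^sup>2)"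
  by (meson less_imp_le mult_nonneg_nonneg dissipation_coefficients_pos dissipation_terms_nonneg assms)+

lemma dissipation_nonneg: "k \<ge> 1 \<Longrightarrow> 0 \<le> dissipation k"
  using dissipation_parts_nonneg unfolding dissipation_eq by fastforce

lemma summable_dissipation: "summable dissipation"
proof -
  have "summable (\<lambda>k. dissipation (Suc k))"
    by (rule summable_decrement[where E = "\<lambda>k. energy (Suc k)"])
      (use energy_nonneg energy_decrease dissipation_nonneg in auto)
  then show ?thesis by (simp only: summable_Suc_iff)
qed

lemma energy_le_energy_1: "k \<ge> 1 \<Longrightarrow> energy k \<le> energy 1"
proof (induction k rule: dec_induct)
  case (step k)
  then show ?case using energy_decrease[of k] dissipation_nonneg[of k] by simp
qed simp

lemma dissipation_ge_parts:
  assumes "k \<ge> 1"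
  shows "\<sigma> * (1 - \<sigma> * \<rho>) * (t (Suc k) * gap (x k)) \<le> dissipation k"
    "\<sigma> / 2 * (t k * (\<beta> * (norm (A *v x k - b))\<^sup>2)) \<le> dissipation k"
    "(\<sigma> - 1) * \<sigma> / (2 * \<gamma>) * (t k * (norm (x k - x (k - 1)))\<^sup>2) \<le> dissipation k"
    "(\<sigma> - 1) * \<sigma> / (2 * \<delta>) * (t k * (norm (l k - l (k - 1)))\<^sup>2) \<le> dissipation k"
  using dissipation_parts_nonneg[OF assms] unfolding dissipation_eq by linarith+

lemma summable_dissipation_terms:
  "summable (\<lambda>k. t (Suc k) * gap (x k))" "summable (\<lambda>k. t k * (\<beta> * (norm (A *v x k - b))\<^sup>2))"
  "summable (\<lambda>k. t k * (norm (x k - x (k - 1)))\<^sup>2)" "summable (\<lambda>k. t k * (norm (l k - l (k - 1)))\<^sup>2)"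
  by (rule summable_scaled_bound[OF summable_dissipation dissipation_coefficients_pos(1), where N = 1]
         summable_scaled_bound[OF summable_dissipation dissipation_coefficients_pos(2), where N = 1]
         summable_scaled_bound[OF summable_dissipation dissipation_coefficients_pos(3), where N = 1]
         summable_scaled_bound[OF summable_dissipation dissipation_coefficients_pos(4), where N = 1];
      use dissipation_terms_nonneg dissipation_ge_parts in simp)+

definition energy_core :: "nat \<Rightarrow> real" where
  "energy_core k = (\<sigma> * t k)\<^sup>2 * gap (x k)
     + \<beta> * \<sigma> * t k * (\<sigma> * t k + 1) / 2 * (norm (A *v x k - b))\<^sup>2
     + (\<sigma> * t k)\<^sup>2 / (2 * \<gamma>) * (norm (x k - x (k - 1)))\<^sup>2
     + (\<sigma> * t k)\<^sup>2 / (2 * \<delta>) * (norm (l k - l (k - 1)))\<^sup>2"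

definition energy_rest :: "nat \<Rightarrow> real" where
  "energy_rest k =
     ((\<sigma> / 2 - 1) * (norm (x (k - 1) - xs))\<^sup>2 + (x (k - 1) - xs) \<bullet> (w (k - 1) - xs)) / \<gamma>
     + ((\<sigma> / 2 - 1) * (norm (l (k - 1) - ls))\<^sup>2 + (l (k - 1) - ls) \<bullet> (mu (k - 1) - ls)) / \<delta>"

lemma energy_split: "k \<ge> 1 \<Longrightarrow> energy k = energy_core k + energy_rest k"
  unfolding energy_def energy_core_def energy_rest_def anchor_energy_split
  by (simp add: w_def mu_def power_mult_distrib add_divide_distrib)

lemma energy_core_parts_nonneg:
  assumes "k \<ge> 1"
  shows "0 \<le> (\<sigma> * t k)\<^sup>2 * gap (x k)"
    "0 \<le> \<beta> * \<sigma> * t k * (\<sigma> * t k + 1) / 2 * (norm (A *v x k - b))\<^sup>2"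
    "0 \<le> (\<sigma> * t k)\<^sup>2 / (2 * \<gamma>) * (norm (x k - x (k - 1)))\<^sup>2"
    "0 \<le> (\<sigma> * t k)\<^sup>2 / (2 * \<delta>) * (norm (l k - l (k - 1)))\<^sup>2"
  using gap_nonneg[of "x k"] beta sigma_gt_1 gamma delta t_ge_1[OF assms] by simp_all

lemma energy_ge_anchor_energy:
  assumes "k \<ge> 1"
  shows "(norm (w (k - 1) - xs))\<^sup>2 \<le> 2 * \<gamma> * energy k"
    and "(norm (mu (k - 1) - ls))\<^sup>2 \<le> 2 * \<delta> * energy k"
proof -
  define X Y where "X = anchor_energy \<sigma> xs (x (k - 1)) (w (k - 1))"
    and "Y = anchor_energy \<sigma> ls (l (k - 1)) (mu (k - 1))"
  have "(norm (w (k - 1) - xs))\<^sup>2 / 2 \<le> X" "(norm (mu (k - 1) - ls))\<^sup>2 / 2 \<le> Y" "0 \<le> X" "0 \<le> Y"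
    unfolding X_def Y_def using anchor_energy_ge anchor_energy_nonneg less_imp_le[OF sigma_gt_1] by blast+
  moreover have "X / \<gamma> \<le> energy k" "Y / \<delta> \<le> energy k"
    using energy_core_parts_nonneg(1,2)[OF assms] \<open>0 \<le> X\<close> \<open>0 \<le> Y\<close> gamma delta
    unfolding energy_def X_def[symmetric] Y_def[symmetric] by (smt (verit) divide_nonneg_pos)+
  ultimately show "(norm (w (k - 1) - xs))\<^sup>2 \<le> 2 * \<gamma> * energy k"
    and "(norm (mu (k - 1) - ls))\<^sup>2 \<le> 2 * \<delta> * energy k"
    using gamma delta by (simp_all add: field_simps)
qed

lemma energy_rest_tendsto_zero: "energy_rest \<longlonglongrightarrow> 0"
proof -
  define M where "M = sqrt (2 * max \<gamma> \<delta> * energy 1)"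
  have bounded: "norm (w k - xs) \<le> M" "norm (mu k - ls) \<le> M" for k
  proof -
    have "2 * \<gamma> * energy (Suc k) \<le> 2 * max \<gamma> \<delta> * energy 1"
      and "2 * \<delta> * energy (Suc k) \<le> 2 * max \<gamma> \<delta> * energy 1"
      using energy_le_energy_1[of "Suc k"] energy_nonneg[of "Suc k"] gamma delta
      by (intro mult_mono; simp)+
    then show "norm (w k - xs) \<le> M" "norm (mu k - ls) \<le> M"
      using energy_ge_anchor_energy[of "Suc k"] unfolding M_def
      by (auto intro!: real_le_rsqrt)
  qed
  have x0: "(\<lambda>k. x k - xs) \<longlonglongrightarrow> 0" and l0: "(\<lambda>k. l k - ls) \<longlonglongrightarrow> 0"
    using tendsto_diff[OF lim_x tendsto_const[of xs]] tendsto_diff[OF lim_l tendsto_const[of ls]]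
    by simp_all
  have "(\<lambda>k. ((\<sigma> / 2 - 1) * (norm (x k - xs))\<^sup>2 + (x k - xs) \<bullet> (w k - xs)) / \<gamma>
      + ((\<sigma> / 2 - 1) * (norm (l k - ls))\<^sup>2 + (l k - ls) \<bullet> (mu k - ls)) / \<delta>)
      \<longlonglongrightarrow> ((\<sigma> / 2 - 1) * 0\<^sup>2 + 0) / \<gamma> + ((\<sigma> / 2 - 1) * 0\<^sup>2 + 0) / \<delta>"
    using gamma delta
    by (intro tendsto_intros tendsto_norm_zero x0 l0
        inner_tendsto_zero_bounded[OF x0 bounded(1)] inner_tendsto_zero_bounded[OF l0 bounded(2)]) auto
  then have "(\<lambda>k. energy_rest (Suc k)) \<longlonglongrightarrow> 0" by (simp add: energy_rest_def)
  then show ?thesis by (rule LIMSEQ_imp_Suc)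
qed

lemma energy_core_div_t_le:
  assumes "k \<ge> 1"
  shows "energy_core k / t k \<le> \<sigma>\<^sup>2 * (t (Suc k) * gap (x k)) + \<sigma>\<^sup>2 * (t k * (\<beta> * (norm (A *v x k - b))\<^sup>2))
     + \<sigma>\<^sup>2 / (2 * \<gamma>) * (t k * (norm (x k - x (k - 1)))\<^sup>2)
     + \<sigma>\<^sup>2 / (2 * \<delta>) * (t k * (norm (l k - l (k - 1)))\<^sup>2)"
proof -
  have t: "1 \<le> t k" "t k \<le> t (Suc k)" using t_ge_1[OF assms] t_mono[OF assms] by simp_all
  have "(\<sigma> * t k)\<^sup>2 * gap (x k) / t k = \<sigma>\<^sup>2 * (t k * gap (x k))"
    using t by (simp add: power2_eq_square)
  also have "\<dots> \<le> \<sigma>\<^sup>2 * (t (Suc k) * gap (x k))"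
    using t gap_nonneg[of "x k"] by (intro mult_left_mono mult_right_mono) auto
  finally have "(\<sigma> * t k)\<^sup>2 * gap (x k) / t k \<le> \<sigma>\<^sup>2 * (t (Suc k) * gap (x k))" .
  moreover have "\<beta> * \<sigma> * t k * (\<sigma> * t k + 1) / 2 * (norm (A *v x k - b))\<^sup>2 / t k
      \<le> \<sigma>\<^sup>2 * (t k * (\<beta> * (norm (A *v x k - b))\<^sup>2))"
  proof -
    have "(\<sigma> * t k + 1) / 2 \<le> \<sigma> * t k" using sigma_t_ge_1[OF assms] by simp
    then have "\<beta> * \<sigma> * (norm (A *v x k - b))\<^sup>2 * ((\<sigma> * t k + 1) / 2)
        \<le> \<beta> * \<sigma> * (norm (A *v x k - b))\<^sup>2 * (\<sigma> * t k)"
      using beta sigma_gt_1 by (intro mult_left_mono) auto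
    moreover have "\<beta> * \<sigma> * t k * (\<sigma> * t k + 1) / 2 * (norm (A *v x k - b))\<^sup>2 / t k
        = \<beta> * \<sigma> * (norm (A *v x k - b))\<^sup>2 * ((\<sigma> * t k + 1) / 2)"
      using t by (simp add: field_simps)
    ultimately show ?thesis by (simp add: power2_eq_square mult_ac)
  qed
  moreover have "(\<sigma> * t k)\<^sup>2 / (2 * \<gamma>) * (norm (x k - x (k - 1)))\<^sup>2 / t k
      = \<sigma>\<^sup>2 / (2 * \<gamma>) * (t k * (norm (x k - x (k - 1)))\<^sup>2)"
    and "(\<sigma> * t k)\<^sup>2 / (2 * \<delta>) * (norm (l k - l (k - 1)))\<^sup>2 / t k
      = \<sigma>\<^sup>2 / (2 * \<delta>) * (t k * (norm (l k - l (k - 1)))\<^sup>2)"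
    using t by (simp_all add: power2_eq_square)
  ultimately show ?thesis unfolding energy_core_def add_divide_distrib by linarith
qed

lemma energy_core_tendsto_zero: "energy_core \<longlonglongrightarrow> 0"
proof -
  have "decseq (\<lambda>k. energy (Suc k))"
  proof (rule decseq_SucI)
    show "energy (Suc (Suc k)) \<le> energy (Suc k)" for k
      using energy_decrease[of "Suc k"] dissipation_nonneg[of "Suc k"] by simp
  qed
  moreover have "\<forall>k. 0 \<le> energy (Suc k)" using energy_nonneg by simp
  ultimately obtain c where "(\<lambda>k. energy (Suc k)) \<longlonglongrightarrow> c"
    by (rule decseq_convergent)
  from tendsto_diff[OF this LIMSEQ_Suc[OF energy_rest_tendsto_zero]]
  have lim: "(\<lambda>k. energy_core (Suc k)) \<longlonglongrightarrow> c" by (simp add: energy_split)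
  have "summable (\<lambda>k. energy_core k / t k)"
  proof (rule summable_comparison_test'[where N = 1])
    show "summable (\<lambda>k. \<sigma>\<^sup>2 * (t (Suc k) * gap (x k)) + \<sigma>\<^sup>2 * (t k * (\<beta> * (norm (A *v x k - b))\<^sup>2))
      + \<sigma>\<^sup>2 / (2 * \<gamma>) * (t k * (norm (x k - x (k - 1)))\<^sup>2)
      + \<sigma>\<^sup>2 / (2 * \<delta>) * (t k * (norm (l k - l (k - 1)))\<^sup>2))"
      using summable_dissipation_terms by (intro summable_add summable_mult)
    show "norm (energy_core k / t k) \<le> \<sigma>\<^sup>2 * (t (Suc k) * gap (x k)) + \<sigma>\<^sup>2 * (t k * (\<beta> * (norm (A *v x k - b))\<^sup>2))
      + \<sigma>\<^sup>2 / (2 * \<gamma>) * (t k * (norm (x k - x (k - 1)))\<^sup>2)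
      + \<sigma>\<^sup>2 / (2 * \<delta>) * (t k * (norm (l k - l (k - 1)))\<^sup>2)" if "k \<ge> 1" for k
      using energy_core_div_t_le[OF that] energy_core_parts_nonneg[OF that] t_ge_1[OF that]
      by (simp add: energy_core_def)
  qed
  then have "summable (\<lambda>k. 1 / t (Suc k) * energy_core (Suc k))"
    by (subst summable_Suc_iff) simp
  moreover have "0 \<le> energy_core (Suc k)" "0 \<le> 1 / t (Suc k)" for k
    using energy_core_parts_nonneg[of "Suc k"] t_ge_1[of "Suc k"]
    unfolding energy_core_def by simp_all
  ultimately have "c = 0"
    using weighted_summable_limit_eq_zero[OF lim _ _ not_summable_inverse_t] by blast
  then have "(\<lambda>k. energy_core (Suc k)) \<longlonglongrightarrow> 0" using lim by simp
  then show ?thesis by (rule LIMSEQ_imp_Suc)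
qed

lemma tendsto_zero_if_le_energy_core:
  assumes "\<And>k. k \<ge> 1 \<Longrightarrow> 0 \<le> u k \<and> u k \<le> C * energy_core k"
  shows "u \<longlonglongrightarrow> 0"
proof (rule Lim_null_comparison)
  show "\<forall>\<^sub>F k in sequentially. norm (u k) \<le> C * energy_core k"
    using eventually_ge_at_top[of 1] by eventually_elim (use assms in auto)
  show "(\<lambda>k. C * energy_core k) \<longlonglongrightarrow> 0"
    using tendsto_mult_right_zero[OF energy_core_tendsto_zero] .
qed

definition fast_decay :: "(nat \<Rightarrow> real) \<Rightarrow> bool" where
  "fast_decay u \<longleftrightarrow> (\<lambda>k. (t k)\<^sup>2 * u k) \<longlonglongrightarrow> 0 \<and> summable (\<lambda>k. t k * u k)"

lemma fast_decay_add: "fast_decay u \<Longrightarrow> fast_decay v \<Longrightarrow> fast_decay (\<lambda>k. u k + v k)"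
  unfolding fast_decay_def by (auto simp: distrib_left intro: tendsto_add_zero summable_add)

lemma fast_decay_cmult: "fast_decay u \<Longrightarrow> fast_decay (\<lambda>k. c * u k)"
  unfolding fast_decay_def
  by (auto simp: mult.left_commute[of _ c] intro: tendsto_mult_right_zero summable_mult)

lemma fast_decay_le:
  assumes "fast_decay u" and "\<And>k. k \<ge> 1 \<Longrightarrow> 0 \<le> v k \<and> v k \<le> u k"
  shows "fast_decay v"
  unfolding fast_decay_def
proof
  have t: "k \<ge> 1 \<Longrightarrow> 0 \<le> t k" for k using t_ge_1[of k] by simp
  show "(\<lambda>k. (t k)\<^sup>2 * v k) \<longlonglongrightarrow> 0"
  proof (rule Lim_null_comparison)
    show "\<forall>\<^sub>F k in sequentially. norm ((t k)\<^sup>2 * v k) \<le> (t k)\<^sup>2 * u k"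
      using eventually_ge_at_top[of 1] by eventually_elim (use assms(2) in \<open>auto intro: mult_left_mono\<close>)
  qed (use assms(1) in \<open>simp add: fast_decay_def\<close>)
  show "summable (\<lambda>k. t k * v k)"
  proof (rule summable_comparison_test'[where N = 1])
    show "norm (t k * v k) \<le> t k * u k" if "k \<ge> 1" for k
      using assms(2)[OF that] t[OF that] by (simp add: abs_mult mult_left_mono)
  qed (use assms(1) in \<open>simp add: fast_decay_def\<close>)
qed

lemma fast_decay_Suc:
  assumes "fast_decay u" and "\<And>k. k \<ge> 1 \<Longrightarrow> 0 \<le> u k"
  shows "fast_decay (\<lambda>k. u (Suc k))"
  unfolding fast_decay_def
proof
  have t: "0 \<le> t k" "t k \<le> t (Suc k)" if "k \<ge> 1" for k
    using t_ge_1[OF that] t_mono[OF that] by simp_all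
  show "(\<lambda>k. (t k)\<^sup>2 * u (Suc k)) \<longlonglongrightarrow> 0"
  proof (rule Lim_null_comparison)
    show "\<forall>\<^sub>F k in sequentially. norm ((t k)\<^sup>2 * u (Suc k)) \<le> (t (Suc k))\<^sup>2 * u (Suc k)"
      using eventually_ge_at_top[of 1]
      by eventually_elim (use t assms(2) in \<open>auto intro!: mult_right_mono power_mono\<close>)
    show "(\<lambda>k. (t (Suc k))\<^sup>2 * u (Suc k)) \<longlonglongrightarrow> 0"
      using assms(1) LIMSEQ_Suc[of "\<lambda>k. (t k)\<^sup>2 * u k"] unfolding fast_decay_def by simp
  qed
  show "summable (\<lambda>k. t k * u (Suc k))"
  proof (rule summable_comparison_test'[where N = 1])
    show "summable (\<lambda>k. t (Suc k) * u (Suc k))"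
      using assms(1) summable_Suc_iff[of "\<lambda>k. t k * u k"] unfolding fast_decay_def by simp
    show "norm (t k * u (Suc k)) \<le> t (Suc k) * u (Suc k)" if "k \<ge> 1" for k
      using t[OF that] assms(2)[of "Suc k"] by (simp add: abs_mult mult_right_mono)
  qed
qed

lemma fast_decay_gap: "fast_decay (\<lambda>k. gap (x k))"
  unfolding fast_decay_def
proof
  show "(\<lambda>k. (t k)\<^sup>2 * gap (x k)) \<longlonglongrightarrow> 0"
  proof (rule tendsto_zero_if_le_energy_core[where C = "1 / \<sigma>\<^sup>2"])
    fix k :: nat assume k: "k \<ge> 1"
    have "\<sigma>\<^sup>2 * ((t k)\<^sup>2 * gap (x k)) \<le> energy_core k"
      using energy_core_parts_nonneg[OF k] unfolding energy_core_def by (simp add: power_mult_distrib)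
    then show "0 \<le> (t k)\<^sup>2 * gap (x k) \<and> (t k)\<^sup>2 * gap (x k) \<le> 1 / \<sigma>\<^sup>2 * energy_core k"
      using gap_nonneg sigma_gt_1 by (simp add: field_simps)
  qed
  show "summable (\<lambda>k. t k * gap (x k))"
  proof (rule summable_comparison_test'[OF summable_dissipation_terms(1), where N = 1])
    show "norm (t k * gap (x k)) \<le> t (Suc k) * gap (x k)" if "k \<ge> 1" for k
      using t_ge_1[OF that] t_mono[OF that] gap_nonneg[of "x k"] by (simp add: mult_right_mono)
  qed
qed

lemma fast_decay_infeasibility: "fast_decay (\<lambda>k. \<beta> * (norm (A *v x k - b))\<^sup>2)"
  unfolding fast_decay_def
proof
  show "(\<lambda>k. (t k)\<^sup>2 * (\<beta> * (norm (A *v x k - b))\<^sup>2)) \<longlonglongrightarrow> 0"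
  proof (rule tendsto_zero_if_le_energy_core[where C = "2 / \<sigma>\<^sup>2"])
    fix k :: nat assume k: "k \<ge> 1"
    have "\<sigma>\<^sup>2 / 2 * ((t k)\<^sup>2 * (\<beta> * (norm (A *v x k - b))\<^sup>2))
        \<le> \<beta> * \<sigma> * t k * (\<sigma> * t k + 1) / 2 * (norm (A *v x k - b))\<^sup>2"
      using beta sigma_gt_1 t_ge_1[OF k]
      by (simp add: power2_eq_square field_simps mult_left_mono)
    then have "\<sigma>\<^sup>2 / 2 * ((t k)\<^sup>2 * (\<beta> * (norm (A *v x k - b))\<^sup>2)) \<le> energy_core k"
      using energy_core_parts_nonneg[OF k] unfolding energy_core_def by linarith
    then show "0 \<le> (t k)\<^sup>2 * (\<beta> * (norm (A *v x k - b))\<^sup>2)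
        \<and> (t k)\<^sup>2 * (\<beta> * (norm (A *v x k - b))\<^sup>2) \<le> 2 / \<sigma>\<^sup>2 * energy_core k"
      using beta sigma_gt_1 by (simp add: field_simps)
  qed
qed (rule summable_dissipation_terms(2))

lemma fast_decay_primal_step: "fast_decay (\<lambda>k. (norm (x k - x (k - 1)))\<^sup>2)"
  unfolding fast_decay_def
proof
  show "(\<lambda>k. (t k)\<^sup>2 * (norm (x k - x (k - 1)))\<^sup>2) \<longlonglongrightarrow> 0"
  proof (rule tendsto_zero_if_le_energy_core[where C = "2 * \<gamma> / \<sigma>\<^sup>2"])
    fix k :: nat assume k: "k \<ge> 1"
    have "(\<sigma> * t k)\<^sup>2 / (2 * \<gamma>) * (norm (x k - x (k - 1)))\<^sup>2 \<le> energy_core k"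
      using energy_core_parts_nonneg[OF k] unfolding energy_core_def by linarith
    then show "0 \<le> (t k)\<^sup>2 * (norm (x k - x (k - 1)))\<^sup>2
        \<and> (t k)\<^sup>2 * (norm (x k - x (k - 1)))\<^sup>2 \<le> 2 * \<gamma> / \<sigma>\<^sup>2 * energy_core k"
      using gamma sigma_gt_1 by (simp add: field_simps power_mult_distrib)
  qed
qed (rule summable_dissipation_terms(3))

lemma fast_decay_gradient: "fast_decay (\<lambda>k. (norm (gf (x k) - gf xs))\<^sup>2)"
  by (rule fast_decay_le[OF fast_decay_cmult[OF fast_decay_gap, of "2 * L"]])
    (use gradient_gap_bound in \<open>simp add: mult.assoc\<close>)

definition grad_residual :: "nat \<Rightarrow> real^'n" where
  "grad_residual k = (gf (extrap t x k) - gf xs) + \<beta> *\<^sub>R (transpose A *v (A *v x (Suc k) - b))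
     + (1 / \<gamma>) *\<^sub>R (x (Suc k) - extrap t x k)"

definition multiplier_residual :: "nat \<Rightarrow> real^'n" where
  "multiplier_residual k = transpose A *v (l k - ls)"

lemma transpose_mu_eq: "k \<ge> 1 \<Longrightarrow> transpose A *v (mu k - ls) = - grad_residual k"
  using stationarity[of k] KKT(2)
  by (simp add: grad_residual_def matrix_vector_mult_diff_distrib eq_neg_iff_add_eq_0 algebra_simps)

lemma norm_extrap_x_le:
  "k \<ge> 1 \<Longrightarrow> norm (extrap t x k - x k) \<le> norm (x k - x (k - 1))"
  using t_ge_1 t_mono by (intro norm_extrap_diff_le) simp_all

lemma norm_step_from_extrap_sq_le:
  assumes "k \<ge> 1"
  shows "(norm (x (Suc k) - extrap t x k))\<^sup>2 \<le> 2 * ((norm (x (Suc k) - x k))\<^sup>2 + (norm (x k - x (k - 1)))\<^sup>2)"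
proof -
  have "norm (x (Suc k) - extrap t x k) \<le> norm (x (Suc k) - x k) + norm (x k - x (k - 1))"
    using norm_triangle_ineq4[of "x (Suc k) - x k" "extrap t x k - x k"] norm_extrap_x_le[OF assms]
    by simp
  then have "(norm (x (Suc k) - extrap t x k))\<^sup>2 \<le> (norm (x (Suc k) - x k) + norm (x k - x (k - 1)))\<^sup>2"
    by (simp add: power_mono)
  also have "\<dots> \<le> 2 * ((norm (x (Suc k) - x k))\<^sup>2 + (norm (x k - x (k - 1)))\<^sup>2)"
    using norm_add_sq_le[of "norm (x (Suc k) - x k)" "norm (x k - x (k - 1))"] by simp
  finally show ?thesis .
qed

lemma grad_residual_sq_le:
  assumes k: "k \<ge> 1" and K: "\<And>v. norm (transpose A *v v) \<le> norm v * K"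
  shows "(norm (grad_residual k))\<^sup>2 \<le> 4 * (L\<^sup>2 * (norm (x k - x (k - 1)))\<^sup>2) + 4 * (2 * L * gap (x k))
     + 4 * (K\<^sup>2 * \<beta> * (\<beta> * (norm (A *v x (Suc k) - b))\<^sup>2))
     + 4 * (2 / \<gamma>\<^sup>2 * ((norm (x (Suc k) - x k))\<^sup>2 + (norm (x k - x (k - 1)))\<^sup>2))"
proof -
  have "norm (gf (extrap t x k) - gf (x k)) \<le> L * norm (x k - x (k - 1))"
    using grad_lip[of "extrap t x k" "x k"] norm_extrap_x_le[OF k] L_pos by (smt (verit) mult_left_mono)
  then have g1: "(norm (gf (extrap t x k) - gf (x k)))\<^sup>2 \<le> L\<^sup>2 * (norm (x k - x (k - 1)))\<^sup>2"
    by (metis norm_ge_zero power_mono power_mult_distrib)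
  have "norm (\<beta> *\<^sub>R (transpose A *v (A *v x (Suc k) - b))) \<le> \<beta> * (norm (A *v x (Suc k) - b) * K)"
    using K beta by (simp add: mult_left_mono)
  then have g3: "(norm (\<beta> *\<^sub>R (transpose A *v (A *v x (Suc k) - b))))\<^sup>2
      \<le> K\<^sup>2 * \<beta> * (\<beta> * (norm (A *v x (Suc k) - b))\<^sup>2)"
    by (smt (verit) norm_ge_zero power_mono power_mult_distrib power2_eq_square mult.commute mult.assoc)
  have "(norm ((1 / \<gamma>) *\<^sub>R (x (Suc k) - extrap t x k)))\<^sup>2
      = (norm (x (Suc k) - extrap t x k))\<^sup>2 / \<gamma>\<^sup>2"
    using gamma by (simp only: norm_scaleR power_mult_distrib abs_of_pos) (simp add: power_divide)
  also have "\<dots> \<le> 2 * ((norm (x (Suc k) - x k))\<^sup>2 + (norm (x k - x (k - 1)))\<^sup>2) / \<gamma>\<^sup>2"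
    using norm_step_from_extrap_sq_le[OF k] by (rule divide_right_mono) simp
  finally have g4: "(norm ((1 / \<gamma>) *\<^sub>R (x (Suc k) - extrap t x k)))\<^sup>2
      \<le> 2 / \<gamma>\<^sup>2 * ((norm (x (Suc k) - x k))\<^sup>2 + (norm (x k - x (k - 1)))\<^sup>2)"
    by (metis times_divide_eq_left)
  have "grad_residual k = (gf (extrap t x k) - gf (x k)) + (gf (x k) - gf xs)
      + \<beta> *\<^sub>R (transpose A *v (A *v x (Suc k) - b)) + (1 / \<gamma>) *\<^sub>R (x (Suc k) - extrap t x k)"
    by (simp add: grad_residual_def)
  then have "(norm (grad_residual k))\<^sup>2 \<le> 4 * ((norm (gf (extrap t x k) - gf (x k)))\<^sup>2
      + (norm (gf (x k) - gf xs))\<^sup>2 + (norm (\<beta> *\<^sub>R (transpose A *v (A *v x (Suc k) - b))))\<^sup>2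
      + (norm ((1 / \<gamma>) *\<^sub>R (x (Suc k) - extrap t x k)))\<^sup>2)"
    by (simp only: norm_add4_sq_le)
  then show ?thesis using g1 gradient_gap_bound[of "x k"] g3 g4 by (smt (verit))
qed

lemma fast_decay_grad_residual: "fast_decay (\<lambda>k. (norm (grad_residual k))\<^sup>2)"
proof -
  obtain K where K: "\<And>v. norm (transpose A *v v) \<le> norm v * K"
    using bounded_linear.bounded[OF matrix_vector_mul_bounded_linear] by blast
  have step: "fast_decay (\<lambda>k. (norm (x (Suc k) - x k))\<^sup>2)"
    using fast_decay_Suc[OF fast_decay_primal_step] by simp
  have "fast_decay (\<lambda>k. 4 * (L\<^sup>2 * (norm (x k - x (k - 1)))\<^sup>2) + 4 * (2 * L * gap (x k))
     + 4 * (K\<^sup>2 * \<beta> * (\<beta> * (norm (A *v x (Suc k) - b))\<^sup>2))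
     + 4 * (2 / \<gamma>\<^sup>2 * ((norm (x (Suc k) - x k))\<^sup>2 + (norm (x k - x (k - 1)))\<^sup>2)))"
  proof -
    have infeasibility: "fast_decay (\<lambda>k. K\<^sup>2 * \<beta> * (\<beta> * (norm (A *v x (Suc k) - b))\<^sup>2))"
      by (rule fast_decay_cmult[OF fast_decay_Suc[OF fast_decay_infeasibility]]) (use beta in simp)
    show ?thesis
      by (intro fast_decay_add fast_decay_primal_step fast_decay_gap step infeasibility fast_decay_cmult)
  qed
  then show ?thesis
    by (rule fast_decay_le) (use grad_residual_sq_le[OF _ K] in simp)
qed

lemma multiplier_residual_Suc:
  assumes "k \<ge> 1"
  shows "multiplier_residual (Suc k)
    = (1 - \<eta> / t (Suc k)) *\<^sub>R multiplier_residual k - (\<eta> / t (Suc k)) *\<^sub>R grad_residual k"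
proof -
  define c where "c = \<eta> / t (Suc k)"
  have "c * (\<sigma> * t (Suc k)) = 1"
    using t_ge_1[of "Suc k"] eta_pos by (simp add: c_def \<sigma>_def)
  then have "c *\<^sub>R ((\<sigma> * t (Suc k)) *\<^sub>R (l (Suc k) - l k)) = l (Suc k) - l k"
    by (simp only: scaleR_scaleR scaleR_one)
  moreover have "mu k - ls = (l k - ls) + (\<sigma> * t (Suc k)) *\<^sub>R (l (Suc k) - l k)"
    by (simp add: mu_def)
  ultimately have "c *\<^sub>R (mu k - ls) = c *\<^sub>R (l k - ls) + (l (Suc k) - l k)"
    by (simp only: scaleR_right_distrib)
  then have "l (Suc k) - ls = (1 - c) *\<^sub>R (l k - ls) + c *\<^sub>R (mu k - ls)"
    by (simp add: algebra_simps)
  then show ?thesis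
    using transpose_mu_eq[OF assms] unfolding c_def
    by (simp add: multiplier_residual_def matrix_vector_right_distrib matrix_vector_mult_scaleR)
qed

lemma multiplier_residual_step:
  assumes k: "k \<ge> 1"
  shows "t (Suc k) * norm (multiplier_residual (Suc k))
    \<le> (1 - (\<eta> - \<rho>) * (1 / t k)) * (t k * norm (multiplier_residual k)) + \<eta> * norm (grad_residual k)"
proof -
  define T where "T = t (Suc k)"
  have T: "1 \<le> T" "T \<le> t k + \<rho>" and tk: "1 \<le> t k"
    using t_ge_1[of "Suc k"] t_Suc_le[OF k] t_ge_1[OF k] by (simp_all add: T_def)
  have "norm (multiplier_residual (Suc k))
      \<le> norm ((1 - \<eta> / T) *\<^sub>R multiplier_residual k) + norm ((\<eta> / T) *\<^sub>R grad_residual k)"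
    unfolding multiplier_residual_Suc[OF k] T_def[symmetric] by (rule norm_triangle_ineq4)
  also have "\<dots> = (1 - \<eta> / T) * norm (multiplier_residual k) + \<eta> / T * norm (grad_residual k)"
    using T eta eta_pos by simp
  finally have "T * norm (multiplier_residual (Suc k))
      \<le> T * ((1 - \<eta> / T) * norm (multiplier_residual k) + \<eta> / T * norm (grad_residual k))"
    using T by (intro mult_left_mono) auto
  also have "\<dots> = (T - \<eta>) * norm (multiplier_residual k) + \<eta> * norm (grad_residual k)"
    using T by (simp add: field_simps)
  also have "(T - \<eta>) * norm (multiplier_residual k) \<le> (t k - (\<eta> - \<rho>)) * norm (multiplier_residual k)"
    using T by (intro mult_right_mono) auto
  also have "(t k - (\<eta> - \<rho>)) * norm (multiplier_residual k)
      = (1 - (\<eta> - \<rho>) * (1 / t k)) * (t k * norm (multiplier_residual k))"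
    using tk by (simp add: field_simps)
  finally show ?thesis unfolding T_def by simp
qed

lemma fast_decay_multiplier_residual: "fast_decay (\<lambda>k. (norm (multiplier_residual k))\<^sup>2)"
proof -
  define h where "h k = t (Suc k) * norm (multiplier_residual (Suc k))" for k
  define a where "a k = 1 / t (Suc k)" for k
  define r where "r k = \<eta> * norm (grad_residual (Suc k))" for k
  have t: "1 \<le> t (Suc k)" for k using t_ge_1 by simp
  have "summable (\<lambda>k. t (Suc k) * (norm (grad_residual (Suc k)))\<^sup>2)"
    using fast_decay_grad_residual summable_Suc_iff[of "\<lambda>k. t k * (norm (grad_residual k))\<^sup>2"]
    unfolding fast_decay_def by simp
  from summable_mult[OF this, of "\<eta>\<^sup>2"]
  have "summable (\<lambda>k. (r k)\<^sup>2 / a k)"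
    by (simp add: r_def a_def power_mult_distrib mult_ac)
  moreover have "0 \<le> h k" "0 < a k" "a k \<le> 1" "0 \<le> r k" for k
    using t[of k] eta_pos by (simp_all add: h_def a_def r_def)
  moreover have "h (Suc k) \<le> (1 - (\<eta> - \<rho>) * a k) * h k + r k" for k
    using multiplier_residual_step[of "Suc k"] by (simp add: h_def a_def r_def)
  moreover have "0 < \<eta> - \<rho>" "\<eta> - \<rho> \<le> 1" using eta rho by simp_all
  moreover have "\<not> summable a" unfolding a_def by (rule not_summable_inverse_t)
  ultimately have "h \<longlonglongrightarrow> 0" and summable: "summable (\<lambda>k. a k * (h k)\<^sup>2)"
    using perturbed_contraction_tendsto_zero[of h a "\<eta> - \<rho>" r] by blast+
  have "(\<lambda>k. (h k)\<^sup>2) \<longlonglongrightarrow> 0"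
    using tendsto_power[OF \<open>h \<longlonglongrightarrow> 0\<close>, of 2] by simp
  moreover have "(\<lambda>k. (h k)\<^sup>2) = (\<lambda>k. (t (Suc k))\<^sup>2 * (norm (multiplier_residual (Suc k)))\<^sup>2)"
    by (simp add: h_def power_mult_distrib)
  ultimately have "(\<lambda>k. (t k)\<^sup>2 * (norm (multiplier_residual k))\<^sup>2) \<longlonglongrightarrow> 0"
    using LIMSEQ_imp_Suc[of "\<lambda>k. (t k)\<^sup>2 * (norm (multiplier_residual k))\<^sup>2"] by simp
  moreover have "summable (\<lambda>k. t k * (norm (multiplier_residual k))\<^sup>2)"
  proof -
    have "(\<lambda>k. a k * (h k)\<^sup>2) = (\<lambda>k. t (Suc k) * (norm (multiplier_residual (Suc k)))\<^sup>2)"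
      using t by (simp add: a_def h_def power2_eq_square fun_eq_iff)
    with summable show ?thesis
      using summable_Suc_iff[of "\<lambda>k. t k * (norm (multiplier_residual k))\<^sup>2"] by simp
  qed
  ultimately show ?thesis unfolding fast_decay_def ..
qed

lemma fast_decay_kkt_residual: "fast_decay (\<lambda>k. (norm (gf (x k) + transpose A *v l k))\<^sup>2)"
proof (rule fast_decay_le)
  show "fast_decay (\<lambda>k. 2 * ((norm (gf (x k) - gf xs))\<^sup>2 + (norm (multiplier_residual k))\<^sup>2))"
    by (intro fast_decay_cmult fast_decay_add fast_decay_gradient fast_decay_multiplier_residual)
  have eq: "gf (x k) + transpose A *v l k = (gf (x k) - gf xs) + multiplier_residual k" for k
    using KKT(2) by (simp add: multiplier_residual_def matrix_vector_mult_diff_distrib eq_neg_iff_add_eq_0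
        algebra_simps)
  show "0 \<le> (norm (gf (x k) + transpose A *v l k))\<^sup>2
      \<and> (norm (gf (x k) + transpose A *v l k))\<^sup>2
        \<le> 2 * ((norm (gf (x k) - gf xs))\<^sup>2 + (norm (multiplier_residual k))\<^sup>2)" for k
    unfolding eq using norm_add_sq_le by simp
qed

lemma fast_decay_imp_rates:
  assumes "fast_decay (\<lambda>k. (norm (r k))\<^sup>2)"
  shows "(\<lambda>k. norm (r k)) \<in> o(\<lambda>k. 1 / t k) \<and> summable (\<lambda>k. t (Suc k) * (norm (r k))\<^sup>2)"
proof
  have lim: "(\<lambda>k. (t k)\<^sup>2 * (norm (r k))\<^sup>2) \<longlonglongrightarrow> 0" and sum: "summable (\<lambda>k. t k * (norm (r k))\<^sup>2)"
    using assms unfolding fast_decay_def by simp_all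
  show "(\<lambda>k. norm (r k)) \<in> o(\<lambda>k. 1 / t k)"
  proof (rule smalloI_tendsto)
    have "(\<lambda>k. sqrt ((t k)\<^sup>2 * (norm (r k))\<^sup>2)) \<longlonglongrightarrow> 0"
      using tendsto_real_sqrt[OF lim] by simp
    moreover have "\<forall>\<^sub>F k in sequentially. sqrt ((t k)\<^sup>2 * (norm (r k))\<^sup>2) = norm (r k) / (1 / t k)"
      using eventually_ge_at_top[of 1]
    proof eventually_elim
      case (elim k)
      then have "1 \<le> t k" by (rule t_ge_1)
      then show ?case by (simp add: real_sqrt_mult)
    qed
    ultimately show "(\<lambda>k. norm (r k) / (1 / t k)) \<longlonglongrightarrow> 0"
      by (rule Lim_transform_eventually)
    show "\<forall>\<^sub>F k in sequentially. 1 / t k \<noteq> 0"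
      using eventually_ge_at_top[of 1] by eventually_elim (use t_ge_1 in force)
  qed
  show "summable (\<lambda>k. t (Suc k) * (norm (r k))\<^sup>2)"
  proof (rule summable_comparison_test'[OF summable_mult[OF sum, of 2], where N = 1])
    show "norm (t (Suc k) * (norm (r k))\<^sup>2) \<le> 2 * (t k * (norm (r k))\<^sup>2)" if "k \<ge> 1" for k
      using t_Suc_le_double[OF that] t_ge_1[of "Suc k"]
      by (simp add: mult_right_mono mult.assoc[symmetric])
  qed
qed

end

theorem theorem4p4:
  fixes f :: "real^'n \<Rightarrow> real" and gf :: "real^'n \<Rightarrow> real^'n"
    and A :: "real^'n^'m" and b :: "real^'m"
    and L \<rho> \<eta> \<gamma> \<delta> \<beta> :: real and t :: "nat \<Rightarrow> real"
    and x :: "nat \<Rightarrow> real^'n" and l :: "nat \<Rightarrow> real^'m"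
    and xs :: "real^'n" and ls :: "real^'m"
  assumes f_convex: "convex_on UNIV f"
    and f_grad: "\<And>z. (f has_derivative (\<lambda>h. gf z \<bullet> h)) (at z)"
    and L_pos: "L > 0"
    and grad_lip: "\<And>y z. norm (gf y - gf z) \<le> L * norm (y - z)"
    and Omega_nonempty: "KKT_set gf A b \<noteq> {}"
    and t_mono: "\<And>k. k \<ge> 1 \<Longrightarrow> t k \<le> t (Suc k)"
    and t_1: "t 1 = 1"
    and t_gt1: "\<And>k. k > 2 \<Longrightarrow> t k > 1"
    and t_lim: "filterlim t at_top sequentially"
    and t_growth: "\<And>k. k \<ge> 1 \<Longrightarrow> (t (Suc k))\<^sup>2 - (t k)\<^sup>2 \<le> \<rho> * t (Suc k)"
    and rho: "0 < \<rho>" "\<rho> < 1"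
    and eta: "\<rho> < \<eta>" "\<eta> < 1"
    and gamma: "\<gamma> > 0" "\<gamma> \<le> 1 / L"
    and delta: "\<delta> > 0"
    and beta: "\<beta> \<ge> 0"
    and init: "x 0 = x 1" "l 0 = l 1"
    and x_step: "\<And>k y. k \<ge> 1 \<Longrightarrow>
        subproblem_obj gf A b t \<eta> \<gamma> \<delta> \<beta> x l k (x (Suc k))
          \<le> subproblem_obj gf A b t \<eta> \<gamma> \<delta> \<beta> x l k y"
    and l_step: "\<And>k. k \<ge> 1 \<Longrightarrow>
        l (Suc k) = extrap t l k + \<delta> *\<^sub>R (c_k t \<eta> k *\<^sub>R (A *v x (Suc k))
                     - (alpha_k t \<eta> k *\<^sub>R (A *v x k) + b))"
    and lim_x: "x \<longlonglongrightarrow> xs"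
    and lim_l: "l \<longlonglongrightarrow> ls"
    and lim_KKT: "(xs, ls) \<in> KKT_set gf A b"
  shows "(\<lambda>k. norm (gf (x k) + transpose A *v l k)) \<in> o(\<lambda>k. 1 / t k)
         \<and> summable (\<lambda>k. t (Suc k) * (norm (gf (x k) + transpose A *v l k))\<^sup>2)"
proof -
  interpret aalm_case_two f gf A b L \<rho> \<eta> \<gamma> \<delta> \<beta> t x l xs ls
    using assms by unfold_locales auto
  show ?thesis by (rule fast_decay_imp_rates[OF fast_decay_kkt_residual])
qed

end
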